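(* In the setting described in the context, let $\mathcal{X}_t(\{\bm{x}_0\})$ be the integrator reach set with time-varying input range $[u_{\min}(s),u_{\max}(s)]$, $s\in[0,t]$. Then every boundary point $\bm{x}^{\rm bdy}\in\partial\mathcal{X}_t(\{\bm{x}_0\})$ admits the parameterization, for some $\bm{\sigma}=(\sigma_1,\dots,\sigma_{n-1})\in\mathcal{W}_t$ and some choice of overall sign $\epsilon\in\{+1,-1\}$, $$\bm{x}^{\rm bdy}(\bm{\sigma})=\bm{\chi}(t,\bm{x}_0)+\int_0^t\nu(s)\bm{\xi}(t-s)\,{\rm d}s+\epsilon\sum_{i=1}^{n}(-1)^{i-1}\int_{\sigma_{i-1}}^{\sigma_i}\mu(s)\bm{\xi}(t-s)\,{\rm d}s,$$ with the convention $\sigma_0:=0$, $\sigma_n:=t$.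
   Context: Let $\bm{A}\in\mathbb{R}^{n\times n}$, $\bm{b}\in\mathbb{R}^n$ with $(\bm{A},\bm{b})$ controllable and $\bm{A}$ having $n$ distinct eigenvalues; let $v_{\min}\le v_{\max}$ be constants, $\bm{z}_0\in\mathbb{R}^n$, $t>0$, and $\bm{x}_0:=\bm{M}\bm{z}_0$. Here $\bm{C}=(\bm{b},\bm{A}\bm{b},\dots,\bm{A}^{n-1}\bm{b})$, $\bm{q}^\top$ is the last row of $\bm{C}^{-1}$, $\bm{M}$ has rows $\bm{q}^\top,\bm{q}^\top\bm{A},\dots,\bm{q}^\top\bm{A}^{n-1}$; $\bm{c}=(c_0,\dots,c_{n-1})^\top$ are the coefficients of the characteristic polynomial $\lambda^n+c_{n-1}\lambda^{n-1}+\dots+c_0$ of $\bm{A}$; $\bm{A}_{\rm con}=\bm{M}\bm{A}\bm{M}^{-1}$ is the companion matrix with first $n-1$ rows $(\bm{0}\ \bm{I}_{n-1})$ and last row $-\bm{c}^\top$; $\bm{b}_{\rm con}=(0,\dots,0,1)^\top$; $\bm{A}_{\rm int}$ has first $n-1$ rows $(\bm{0}\ \bm{I}_{n-1})$ and last row zero. For $0\le s\le t$, with $f(\tau)=\langle\bm{c},e^{(s-\tau)\bm{A}_{\rm con}}\bm{b}_{\rm con}\rangle$ and $I(v)=v(s)-\int_0^s f(\tau)v(\tau)\,{\rm d}\tau$, let $I_{\min}(s),I_{\max}(s)$ be the inf and sup of $I(v)$ over $v\in C([0,s])$ with $v_{\min}\le v\le v_{\max}$, and $u_{\min}(s)=-\langle\bm{c},e^{s\bm{A}_{\rm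 con}}\bm{M}\bm{z}_0\rangle+I_{\min}(s)$, $u_{\max}(s)=-\langle\bm{c},e^{s\bm{A}_{\rm con}}\bm{M}\bm{z}_0\rangle+I_{\max}(s)$. The integrator reach set $\mathcal{X}_t(\{\bm{x}_0\})$ is the set of $\bm{x}(t)$ with $\dot{\bm{x}}=\bm{A}_{\rm int}\bm{x}+\bm{b}_{\rm con}u$, $\bm{x}(0)=\bm{x}_0$, $u\in C([0,t])$, $u_{\min}(s)\le u(s)\le u_{\max}(s)$ for all $s$. Define $\mu(s):=(u_{\max}(s)-u_{\min}(s))/2$, $\nu(s):=(u_{\max}(s)+u_{\min}(s))/2$, $\bm{\xi}(s):=\big(\tfrac{s^{n-1}}{(n-1)!},\tfrac{s^{n-2}}{(n-2)!},\dots,s,1\big)^\top$, and $\bm{\chi}(t,\bm{x}_0)\in\mathbb{R}^n$ componentwise by $\chi_k=\sum_{\ell=k}^{n}\frac{t^{\ell-k}}{(\ell-k)!}x_{\ell0}$, $k=1,\dots,n$, where $x_{\ell 0}$ is the $\ell$-th component of $\bm{x}_0$. The Weyl chamber is $\mathcal{W}_t:=\{\bm{\sigma}\in\mathbb{R}^{n-1}\mid 0\le\sigma_1\le\dots\le\sigma_{n-1}\le t\}$. *)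

theory Defs
  imports "HOL-Analysis.Analysis"
begin

type_synonym 'n rvec = "(real, 'n) vec"
type_synonym 'n rmat = "((real, 'n) vec, 'n) vec"

text \<open>Coordinates of R^n are indexed by a finite, well-ordered type 'n (n = CARD('n));
  the k-th coordinate (1-based) is the element of 'n at 0-based position k-1.\<close>

definition pos :: "'n::{finite,wellorder} \<Rightarrow> nat" where
  "pos k = card {j. j < k}"

primrec mpow :: "('n::finite) rmat \<Rightarrow> nat \<Rightarrow> 'n rmat" where
  "mpow A 0 = mat 1"
| "mpow A (Suc k) = A ** mpow A k"

definition mexp :: "('n::finite) rmat \<Rightarrow> 'n rmat" where
  "mexp A = (\<chi> i j. (\<Sum>k. (mpow A k) $ i $ j / fact k))"

definition ctrb :: "('n::{finite,wellorder}) rmat \<Rightarrow> 'n rvec \<Rightarrow> 'n rmat" where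
  "ctrb A b = (\<chi> i j. (mpow A (pos j) *v b) $ i)"

definition controllable :: "('n::{finite,wellorder}) rmat \<Rightarrow> 'n rvec \<Rightarrow> bool" where
  "controllable A b \<longleftrightarrow> rank (ctrb A b) = CARD('n)"

definition qvec :: "('n::{finite,wellorder}) rmat \<Rightarrow> 'n rvec \<Rightarrow> 'n rvec" where
  "qvec A b = matrix_inv (ctrb A b) $ Max (UNIV :: 'n set)"

definition Mmat :: "('n::{finite,wellorder}) rmat \<Rightarrow> 'n rvec \<Rightarrow> 'n rmat" where
  "Mmat A b = (\<chi> i. qvec A b v* mpow A (pos i))"

definition charcoef :: "('n::{finite,wellorder}) rmat \<Rightarrow> 'n rvec" where
  "charcoef A = (SOME c. \<forall>x::real. det (mat x - A) = x ^ CARD('n) + (\<Sum>j\<in>UNIV. c $ j * x ^ pos j))"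

definition distinct_eigenvalues :: "('n::{finite,wellorder}) rmat \<Rightarrow> bool" where
  "distinct_eigenvalues A \<longleftrightarrow>
     card {z::complex. det (mat z - (\<chi> i j. complex_of_real (A $ i $ j))) = 0} = CARD('n)"

definition Acon :: "('n::{finite,wellorder}) rmat \<Rightarrow> 'n rmat" where
  "Acon A = (\<chi> i j. if pos i < CARD('n) - 1 then (if pos j = pos i + 1 then 1 else 0)
                     else - (charcoef A $ j))"

definition Aint :: "('n::{finite,wellorder}) rmat" where
  "Aint = (\<chi> i j. if pos i < CARD('n) - 1 then (if pos j = pos i + 1 then 1 else 0) else 0)"

definition bcon :: "('n::{finite,wellorder}) rvec" where
  "bcon = (\<chi> i. if pos i = CARD('n) - 1 then 1 else 0)"

definition fker :: "('n::{finite,wellorder}) rmat \<Rightarrow> real \<Rightarrow> real \<Rightarrow> real" where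
  "fker A s \<tau> = inner (charcoef A) (mexp ((s - \<tau>) *\<^sub>R Acon A) *v (bcon :: 'n rvec))"

definition Ifun :: "('n::{finite,wellorder}) rmat \<Rightarrow> real \<Rightarrow> (real \<Rightarrow> real) \<Rightarrow> real" where
  "Ifun A s v = v s - integral {0..s} (\<lambda>\<tau>. fker A s \<tau> * v \<tau>)"

definition Ivals :: "('n::{finite,wellorder}) rmat \<Rightarrow> real \<Rightarrow> real \<Rightarrow> real \<Rightarrow> real set" where
  "Ivals A vmin vmax s = {Ifun A s v | v. continuous_on {0..s} v \<and>
                              (\<forall>\<tau>\<in>{0..s}. vmin \<le> v \<tau> \<and> v \<tau> \<le> vmax)}"

definition Imin :: "('n::{finite,wellorder}) rmat \<Rightarrow> real \<Rightarrow> real \<Rightarrow> real \<Rightarrow> real" where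
  "Imin A vmin vmax s = Inf (Ivals A vmin vmax s)"

definition Imax :: "('n::{finite,wellorder}) rmat \<Rightarrow> real \<Rightarrow> real \<Rightarrow> real \<Rightarrow> real" where
  "Imax A vmin vmax s = Sup (Ivals A vmin vmax s)"

definition umin :: "('n::{finite,wellorder}) rmat \<Rightarrow> 'n rvec \<Rightarrow> real \<Rightarrow> real \<Rightarrow> 'n rvec \<Rightarrow> real \<Rightarrow> real" where
  "umin A b vmin vmax z0 s =
     - inner (charcoef A) (mexp (s *\<^sub>R Acon A) *v (Mmat A b *v z0)) + Imin A vmin vmax s"

definition umax :: "('n::{finite,wellorder}) rmat \<Rightarrow> 'n rvec \<Rightarrow> real \<Rightarrow> real \<Rightarrow> 'n rvec \<Rightarrow> real \<Rightarrow> real" where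
  "umax A b vmin vmax z0 s =
     - inner (charcoef A) (mexp (s *\<^sub>R Acon A) *v (Mmat A b *v z0)) + Imax A vmin vmax s"

definition int_reach :: "real \<Rightarrow> ('n::{finite,wellorder}) rvec \<Rightarrow> (real \<Rightarrow> real) \<Rightarrow> (real \<Rightarrow> real) \<Rightarrow> ('n rvec) set" where
  "int_reach t x0 ulo uhi =
     {x t | x u. continuous_on {0..t} u \<and> (\<forall>s\<in>{0..t}. ulo s \<le> u s \<and> u s \<le> uhi s) \<and>
        x 0 = x0 \<and>
        (\<forall>s\<in>{0..t}. (x has_vector_derivative (Aint *v x s + u s *\<^sub>R bcon)) (at s within {0..t}))}"

definition xi :: "real \<Rightarrow> ('n::{finite,wellorder}) rvec" where
  "xi s = (\<chi> k. s ^ (CARD('n) - 1 - pos k) / fact (CARD('n) - 1 - pos k))"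

definition chi_vec :: "real \<Rightarrow> ('n::{finite,wellorder}) rvec \<Rightarrow> 'n rvec" where
  "chi_vec t x0 = (\<chi> k. \<Sum>l\<in>{l. pos k \<le> pos l}. t ^ (pos l - pos k) / fact (pos l - pos k) * x0 $ l)"

end

theory Submission
  imports Defs "HOL-Computational_Algebra.Polynomial"
begin

(* By variation of constants the reach set is the affine image
     chi(t,x0) + { integral_0^t u(s) xi(t-s) ds | u continuous, u_min <= u <= u_max },
   so it is convex and a boundary point x maximises some linear functional y over its closure.
   The switching function y . xi(t-s) is a nonzero polynomial of degree < n in s, so it has
   fewer than n zeros and its sign pattern alternates on at most n intervals.  Pointwise
   maximisation shows that the supremum of y over the reach set is attained by the bang-bang
   input nu + mu sgn(y . xi(t-s)) (approximated by continuous saturated inputs), and since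
   the switching function vanishes only finitely often, reachable points approaching the
   supremum converge to the bang-bang point; hence x is that point, and splitting its integral
   at the sign changes gives the formula.  The continuity of u_min and u_max required for all
   this follows from explicit formulas for I_min and I_max, obtained by the same pointwise
   maximisation. *)

section \<open>Alternating sign partitions\<close>

lemma continuous_constant_sign:
  fixes g :: "real \<Rightarrow> real"
  assumes g: "continuous_on {a..b} g" and nz: "\<And>s. s \<in> {a<..<b} \<Longrightarrow> g s \<noteq> 0"
  obtains e :: real where "e \<in> {1, -1}" "\<And>s. s \<in> {a<..<b} \<Longrightarrow> 0 \<le> e * g s"
proof -
  have no_change: False if pq: "p \<in> {a<..<b}" "q \<in> {a<..<b}" "g p < 0" "0 < g q" for p q
  proof -
    have "continuous_on (closed_segment p q) g"
      using pq by (intro continuous_on_subset[OF g]) (auto simp: closed_segment_eq_real_ivl)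
    then obtain r where "r \<in> closed_segment p q" "g r = 0"
      using IVT'_closed_segment_real[of 0 g p q] pq by (auto simp: closed_segment_eq_real_ivl)
    with pq nz show False
      by (auto simp: closed_segment_eq_real_ivl split: if_splits)
  qed
  show ?thesis
  proof (cases "\<exists>p\<in>{a<..<b}. g p < 0")
    case True
    with no_change have "0 \<le> -1 * g s" if "s \<in> {a<..<b}" for s
      using that by force
    with that show ?thesis by blast
  next
    case False
    then show ?thesis
      by (intro that[of 1]) (auto simp: not_less)
  qed
qed

(* The i-th interval is [\<sigma> i, \<sigma> (Suc i)] for i < N, i.e. the interval [\<sigma>_{i-1}, \<sigma>_i] of the
   paper shifted to 0-based indices. *)

definition alternating_partition :: "(real \<Rightarrow> real) \<Rightarrow> nat \<Rightarrow> (nat \<Rightarrow> real) \<Rightarrow> real \<Rightarrow> bool" where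
  "alternating_partition g N \<sigma> \<epsilon> \<longleftrightarrow> \<epsilon> \<in> {1, -1} \<and> (\<forall>i<N. \<sigma> i \<le> \<sigma> (Suc i)) \<and>
     (\<forall>i<N. \<forall>s\<in>{\<sigma> i<..<\<sigma> (Suc i)}. 0 \<le> \<epsilon> * (-1) ^ i * g s)"

lemma alternating_partition_Cons:
  assumes "alternating_partition g N \<sigma> \<epsilon>" "a \<le> \<sigma> 0" "\<And>s. s \<in> {a<..<\<sigma> 0} \<Longrightarrow> 0 \<le> - \<epsilon> * g s"
  shows "alternating_partition g (Suc N) (\<lambda>i. if i = 0 then a else \<sigma> (i - 1)) (- \<epsilon>)"
  using assms unfolding alternating_partition_def by (auto simp: less_Suc_eq_0_disj)

(* A zero at which g keeps its sign is absorbed into the first interval. *)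

lemma alternating_partition_merge:
  assumes P: "alternating_partition g N \<sigma> \<epsilon>" and "0 < N" "a \<le> \<sigma> 0" "g (\<sigma> 0) = 0"
    and left: "\<And>s. s \<in> {a<..<\<sigma> 0} \<Longrightarrow> 0 \<le> \<epsilon> * g s"
  shows "alternating_partition g N (\<sigma>(0 := a)) \<epsilon>"
proof -
  from P have mono: "\<And>i. i < N \<Longrightarrow> \<sigma> i \<le> \<sigma> (Suc i)"
    and sign: "\<And>i s. i < N \<Longrightarrow> s \<in> {\<sigma> i<..<\<sigma> (Suc i)} \<Longrightarrow> 0 \<le> \<epsilon> * (-1) ^ i * g s"
    unfolding alternating_partition_def by auto
  have first: "0 \<le> \<epsilon> * g s" if "s \<in> {a<..<\<sigma> 1}" for s
  proof -
    consider "s < \<sigma> 0" | "s = \<sigma> 0" | "\<sigma> 0 < s"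
      by linarith
    then show ?thesis
    proof cases
      case 1
      with that left show ?thesis by simp
    next
      case 2
      with \<open>g (\<sigma> 0) = 0\<close> show ?thesis by simp
    next
      case 3
      with that sign[of 0 s] \<open>0 < N\<close> show ?thesis by simp
    qed
  qed
  have "(\<sigma>(0 := a)) i \<le> (\<sigma>(0 := a)) (Suc i)" if "i < N" for i
    using that mono[of i] mono[of 0] \<open>a \<le> \<sigma> 0\<close> \<open>0 < N\<close> by (cases i) auto
  moreover have "0 \<le> \<epsilon> * (-1) ^ i * g s" if "i < N" "s \<in> {(\<sigma>(0 := a)) i<..<(\<sigma>(0 := a)) (Suc i)}" for i s
    using that first sign[of i s] by (cases i) auto
  ultimately show ?thesis
    using P unfolding alternating_partition_def by blast
qed

lemma alternating_partition_pad:
  assumes P: "alternating_partition g N \<sigma> \<epsilon>" and "N \<le> M"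
  shows "alternating_partition g M (\<lambda>i. \<sigma> (min i N)) \<epsilon>"
proof -
  have "\<sigma> (min i N) \<le> \<sigma> (min (Suc i) N)" if "i < M" for i
    using P by (cases "i < N") (auto simp: alternating_partition_def min_absorb1 min_absorb2)
  moreover have "0 \<le> \<epsilon> * (-1) ^ i * g s" if "i < M" "s \<in> {\<sigma> (min i N)<..<\<sigma> (min (Suc i) N)}" for i s
    using P that by (cases "i < N") (auto simp: alternating_partition_def min_absorb1 min_absorb2)
  ultimately show ?thesis
    using P unfolding alternating_partition_def by blast
qed

lemma first_zero_split:
  fixes g :: "real \<Rightarrow> real"
  assumes g: "continuous_on {a..b} g" and fin: "finite {s\<in>{a<..<b}. g s = 0}"
    and nonempty: "{s\<in>{a<..<b}. g s = 0} \<noteq> {}"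
  obtains z e where "a < z" "z < b" "g z = 0" "e \<in> {1, -1}" "\<And>s. s \<in> {a<..<z} \<Longrightarrow> 0 \<le> e * g s"
    "finite {s\<in>{z<..<b}. g s = 0}" "card {s\<in>{z<..<b}. g s = 0} < card {s\<in>{a<..<b}. g s = 0}"
proof -
  define Z where "Z = {s\<in>{a<..<b}. g s = 0}"
  define z where "z = Min Z"
  have z: "z \<in> Z" "a < z" "z < b" "g z = 0" and z_min: "\<And>s. s \<in> Z \<Longrightarrow> z \<le> s"
    using Min_in[of Z] fin nonempty unfolding z_def Z_def by auto
  have "continuous_on {a..z} g"
    using z by (intro continuous_on_subset[OF g]) auto
  moreover have "g s \<noteq> 0" if "s \<in> {a<..<z}" for s
    using z_min[of s] that z unfolding Z_def by fastforce
  ultimately obtain e where "e \<in> {1, -1}" "\<And>s. s \<in> {a<..<z} \<Longrightarrow> 0 \<le> e * g s"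
    using continuous_constant_sign by blast
  moreover have "{s\<in>{z<..<b}. g s = 0} \<subset> Z"
    using z unfolding Z_def by auto
  then have "finite {s\<in>{z<..<b}. g s = 0}" "card {s\<in>{z<..<b}. g s = 0} < card Z"
    using fin unfolding Z_def by (auto intro: finite_subset psubset_card_mono)
  ultimately show ?thesis
    using that z unfolding Z_def by blast
qed

lemma alternating_partition_exists:
  fixes g :: "real \<Rightarrow> real"
  assumes "continuous_on {a..b} g" "a \<le> b" "finite {s\<in>{a<..<b}. g s = 0}"
    and "card {s\<in>{a<..<b}. g s = 0} < N"
  shows "\<exists>\<sigma> \<epsilon>. \<sigma> 0 = a \<and> \<sigma> N = b \<and> alternating_partition g N \<sigma> \<epsilon>"
  using assms
proof (induction N arbitrary: a)
  case 0
  then show ?case by simp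
next
  case (Suc N)
  show ?case
  proof (cases "{s\<in>{a<..<b}. g s = 0} = {}")
    case True
    then obtain e where "e \<in> {1, -1}" "\<And>s. s \<in> {a<..<b} \<Longrightarrow> 0 \<le> e * g s"
      using continuous_constant_sign[OF Suc.prems(1)] by blast
    then have "alternating_partition g (Suc N) (\<lambda>i. if i = 0 then a else b) e"
      using Suc.prems(2) by (auto simp: alternating_partition_def)
    then show ?thesis
      by (intro exI[of _ "\<lambda>i. if i = 0 then a else b"] exI[of _ e]) simp
  next
    case False
    with Suc.prems(1,3) obtain z e where z: "a < z" "z < b" "g z = 0"
      and e: "e \<in> {1, -1}" "\<And>s. s \<in> {a<..<z} \<Longrightarrow> 0 \<le> e * g s"
      and rest: "finite {s\<in>{z<..<b}. g s = 0}" "card {s\<in>{z<..<b}. g s = 0} < N"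
      using Suc.prems(4) by (elim first_zero_split) auto
    moreover have "continuous_on {z..b} g"
      using z by (intro continuous_on_subset[OF Suc.prems(1)]) auto
    ultimately obtain \<sigma> \<epsilon> where \<sigma>: "\<sigma> 0 = z" "\<sigma> N = b" "alternating_partition g N \<sigma> \<epsilon>"
      using Suc.IH by fastforce
    then have "\<epsilon> \<in> {1, -1}" "0 < N"
      using rest(2) by (auto simp: alternating_partition_def)
    with e(1) consider "e = \<epsilon>" | "e = - \<epsilon>"
      by auto
    then show ?thesis
    proof cases
      case 1
      with \<sigma> e z have "alternating_partition g N (\<sigma>(0 := a)) \<epsilon>"
        by (intro alternating_partition_merge) (auto simp: \<open>0 < N\<close>)
      then have "alternating_partition g (Suc N) (\<lambda>i. (\<sigma>(0 := a)) (min i N)) \<epsilon>"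
        by (rule alternating_partition_pad) simp
      with \<sigma> show ?thesis
        using \<open>0 < N\<close> by (intro exI[of _ "\<lambda>i. (\<sigma>(0 := a)) (min i N)"] exI[of _ \<epsilon>]) simp
    next
      case 2
      with \<sigma> e z have "alternating_partition g (Suc N) (\<lambda>i. if i = 0 then a else \<sigma> (i - 1)) (- \<epsilon>)"
        by (intro alternating_partition_Cons) auto
      with \<sigma> show ?thesis
        by (intro exI[of _ "\<lambda>i. if i = 0 then a else \<sigma> (i - 1)"] exI[of _ "- \<epsilon>"]) simp
    qed
  qed
qed

lemma prefix_mono_le:
  fixes \<sigma> :: "nat \<Rightarrow> 'a::preorder"
  assumes "\<And>i. i < N \<Longrightarrow> \<sigma> i \<le> \<sigma> (Suc i)" "j \<le> k" "k \<le> N"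
  shows "\<sigma> j \<le> \<sigma> k"
proof -
  have "\<sigma> (min j N) \<le> \<sigma> (min k N)"
  proof (rule lift_Suc_mono_le[of "\<lambda>i. \<sigma> (min i N)"])
    show "\<sigma> (min n N) \<le> \<sigma> (min (Suc n) N)" for n
      using assms(1)[of n] by (cases "n < N") (auto simp: min_absorb1 min_absorb2)
  qed (use assms in simp)
  with assms show ?thesis
    by (simp add: min_absorb1)
qed

lemma has_integral_partition:
  fixes f :: "real \<Rightarrow> 'a::banach"
  assumes "\<And>i. i < N \<Longrightarrow> \<sigma> i \<le> \<sigma> (Suc i)"
    and "\<And>i. i < N \<Longrightarrow> (f has_integral I i) {\<sigma> i..\<sigma> (Suc i)}"
  shows "(f has_integral (\<Sum>i<N. I i)) {\<sigma> 0..\<sigma> N}"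
  using assms
proof (induction N)
  case 0
  then show ?case by (simp add: has_integral_refl)
next
  case (Suc N)
  have "\<sigma> 0 \<le> \<sigma> N"
    using Suc.prems(1) by (rule prefix_mono_le) auto
  with Suc show ?case
    using has_integral_combine[of "\<sigma> 0" "\<sigma> N" "\<sigma> (Suc N)" f] by simp
qed

lemma has_integral_sgn_partition:
  fixes H :: "real \<Rightarrow> real \<Rightarrow> 'a::banach"
  assumes P: "alternating_partition g N \<sigma> \<epsilon>" and fin: "finite {s\<in>{\<sigma> 0..\<sigma> N}. g s = 0}"
    and H: "\<And>v. continuous_on {\<sigma> 0..\<sigma> N} (\<lambda>s. H s v)"
  shows "((\<lambda>s. H s (sgn (g s))) has_integral
           (\<Sum>i<N. integral {\<sigma> i..\<sigma> (Suc i)} (\<lambda>s. H s (\<epsilon> * (-1) ^ i)))) {\<sigma> 0..\<sigma> N}"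
proof (rule has_integral_partition)
  from P have mono: "\<And>i. i < N \<Longrightarrow> \<sigma> i \<le> \<sigma> (Suc i)"
    and sign: "\<And>i s. i < N \<Longrightarrow> s \<in> {\<sigma> i<..<\<sigma> (Suc i)} \<Longrightarrow> 0 \<le> \<epsilon> * (-1) ^ i * g s"
    unfolding alternating_partition_def by auto
  show "\<sigma> i \<le> \<sigma> (Suc i)" if "i < N" for i
    using mono that .
  fix i assume i: "i < N"
  define e where "e = \<epsilon> * (-1) ^ i"
  have e: "e \<in> {1, -1}"
    using P unfolding e_def alternating_partition_def by (cases "even i") auto
  have sub: "{\<sigma> i..\<sigma> (Suc i)} \<subseteq> {\<sigma> 0..\<sigma> N}"
    using prefix_mono_le[of N \<sigma> 0 i] prefix_mono_le[of N \<sigma> "Suc i" N] mono i by auto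
  have "((\<lambda>s. H s e) has_integral integral {\<sigma> i..\<sigma> (Suc i)} (\<lambda>s. H s e)) {\<sigma> i..\<sigma> (Suc i)}"
    by (intro integrable_integral integrable_continuous_real continuous_on_subset[OF H sub])
  then show "((\<lambda>s. H s (sgn (g s))) has_integral
               integral {\<sigma> i..\<sigma> (Suc i)} (\<lambda>s. H s (\<epsilon> * (-1) ^ i))) {\<sigma> i..\<sigma> (Suc i)}"
    unfolding e_def[symmetric]
  proof (rule has_integral_spike_finite[rotated 2])
    show "finite ({s\<in>{\<sigma> 0..\<sigma> N}. g s = 0} \<union> {\<sigma> i, \<sigma> (Suc i)})"
      using fin by simp
    fix s assume s: "s \<in> {\<sigma> i..\<sigma> (Suc i)} - ({s\<in>{\<sigma> 0..\<sigma> N}. g s = 0} \<union> {\<sigma> i, \<sigma> (Suc i)})"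
    then have "g s \<noteq> 0" "0 \<le> e * g s"
      using sub sign[OF i, of s] unfolding e_def by auto
    with e show "H s (sgn (g s)) = H s e"
      by (auto simp: sgn_if zero_le_mult_iff)
  qed
qed

lemma integrable_sgn_comp:
  fixes H :: "real \<Rightarrow> real \<Rightarrow> 'a::banach"
  assumes g: "continuous_on {a..b} g" and fin: "finite {s\<in>{a..b}. g s = 0}"
    and H: "\<And>v. continuous_on {a..b} (\<lambda>s. H s v)"
  shows "(\<lambda>s. H s (sgn (g s))) integrable_on {a..b}"
proof (cases "a \<le> b")
  case True
  have "finite {s\<in>{a<..<b}. g s = 0}"
    by (rule finite_subset[OF _ fin]) auto
  then obtain \<sigma> \<epsilon> where "\<sigma> 0 = a" "\<sigma> (Suc (card {s\<in>{a<..<b}. g s = 0})) = b"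
    "alternating_partition g (Suc (card {s\<in>{a<..<b}. g s = 0})) \<sigma> \<epsilon>"
    using alternating_partition_exists[OF g True] by blast
  with fin H show ?thesis
    using has_integral_sgn_partition[of g "Suc (card {s\<in>{a<..<b}. g s = 0})" \<sigma> \<epsilon> H]
    by (auto simp: integrable_on_def)
qed (simp add: integrable_on_empty)

section \<open>Bang-bang inputs\<close>

definition bang_bang :: "real \<Rightarrow> real \<Rightarrow> real \<Rightarrow> real" where
  "bang_bang lo hi r = (hi + lo) / 2 + (hi - lo) / 2 * sgn r"

definition smoothed_bang_bang :: "real \<Rightarrow> real \<Rightarrow> real \<Rightarrow> real \<Rightarrow> real" where
  "smoothed_bang_bang lo hi k r = (hi + lo) / 2 + (hi - lo) / 2 * max (-1) (min 1 (k * r))"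

lemma bang_bang_eq: "bang_bang lo hi r = (if 0 < r then hi else if r < 0 then lo else (hi + lo) / 2)"
  by (simp add: bang_bang_def sgn_if field_simps)

lemma bang_bang_gap:
  fixes lo hi u r :: real
  assumes "lo \<le> u" "u \<le> hi"
  shows "r * (bang_bang lo hi r - u) = \<bar>r\<bar> * \<bar>bang_bang lo hi r - u\<bar>"
    and "\<bar>bang_bang lo hi r - u\<bar> \<le> hi - lo"
proof -
  show "r * (bang_bang lo hi r - u) = \<bar>r\<bar> * \<bar>bang_bang lo hi r - u\<bar>"
    using assms by (auto simp: bang_bang_eq abs_mult algebra_simps)
  show "\<bar>bang_bang lo hi r - u\<bar> \<le> hi - lo"
    using assms by (auto simp: bang_bang_eq abs_le_iff field_simps)
qed

lemma mult_bang_bang: "lo \<le> hi \<Longrightarrow> r * bang_bang lo hi r = max (r * lo) (r * hi)"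
  by (auto simp: bang_bang_eq max_def mult_le_cancel_left)

lemma clamp_gap:
  fixes k r :: real
  assumes "0 < k"
  shows "\<bar>r\<bar> - r * max (-1) (min 1 (k * r)) \<le> 1 / k"
proof (cases "\<bar>k * r\<bar> < 1")
  case True
  then have "\<bar>r\<bar> - r * max (-1) (min 1 (k * r)) = \<bar>r\<bar> - r * (k * r)"
    by (auto simp: abs_less_iff)
  moreover have "\<bar>r\<bar> < 1 / k"
    using True assms by (simp add: abs_mult field_simps)
  moreover have "0 \<le> r * (k * r)"
    using assms by (simp add: mult.left_commute)
  ultimately show ?thesis by linarith
next
  case False
  then consider "1 \<le> k * r" | "k * r \<le> -1"
    by (auto simp: abs_less_iff not_less)
  then have "r * max (-1) (min 1 (k * r)) = \<bar>r\<bar>"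
  proof cases
    case 1
    then have "0 < k * r"
      by linarith
    with assms have "0 < r"
      by (simp add: zero_less_mult_iff)
    with 1 show ?thesis by simp
  next
    case 2
    then have "k * r < 0"
      by linarith
    with assms have "r < 0"
      by (simp add: mult_less_0_iff)
    with 2 show ?thesis by simp
  qed
  with assms show ?thesis by simp
qed

lemma smoothed_bang_bang_bounds:
  assumes "lo \<le> hi"
  shows "lo \<le> smoothed_bang_bang lo hi k r" "smoothed_bang_bang lo hi k r \<le> hi"
proof -
  define c where "c = max (-1) (min 1 (k * r))"
  define w where "w = (hi - lo) / 2 * c"
  have "-1 \<le> c" "c \<le> 1"
    unfolding c_def by auto
  then have "(hi - lo) / 2 * c \<le> (hi - lo) / 2 * 1" "(hi - lo) / 2 * (-1) \<le> (hi - lo) / 2 * c"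
    using assms by (intro mult_left_mono; simp)+
  then have w: "w \<le> (hi - lo) / 2" "- ((hi - lo) / 2) \<le> w"
    unfolding w_def by simp_all
  have eq: "smoothed_bang_bang lo hi k r = (hi + lo) / 2 + w"
    unfolding smoothed_bang_bang_def c_def w_def ..
  show "lo \<le> smoothed_bang_bang lo hi k r" "smoothed_bang_bang lo hi k r \<le> hi"
    using w unfolding eq by (simp_all add: field_simps)
qed

lemma smoothed_bang_bang_gap:
  assumes "lo \<le> hi" "0 < k"
  shows "r * (bang_bang lo hi r - smoothed_bang_bang lo hi k r) \<le> (hi - lo) / (2 * k)"
proof -
  have "r * (bang_bang lo hi r - smoothed_bang_bang lo hi k r)
      = (hi - lo) / 2 * (r * sgn r - r * max (-1) (min 1 (k * r)))"
    unfolding bang_bang_def smoothed_bang_bang_def by (simp add: algebra_simps)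
  also have "\<dots> = (hi - lo) / 2 * (\<bar>r\<bar> - r * max (-1) (min 1 (k * r)))"
    by (simp add: sgn_if)
  also have "\<dots> \<le> (hi - lo) / 2 * (1 / k)"
    using assms clamp_gap by (intro mult_left_mono) auto
  finally show ?thesis by simp
qed

lemma integral_bump_tendsto_0:
  fixes \<phi> :: "real \<Rightarrow> real"
  assumes \<phi>: "continuous_on {a..b} \<phi>" and fin: "finite {s\<in>{a..b}. \<phi> s = 0}"
  shows "(\<lambda>j. integral {a..b} (\<lambda>s. max 0 (1 - real (Suc j) * \<bar>\<phi> s\<bar>))) \<longlonglongrightarrow> 0"
proof -
  define L where "L s = (if \<phi> s = 0 then 1 else 0 :: real)" for s
  have "(\<lambda>j. max 0 (1 - real (Suc j) * \<bar>\<phi> s\<bar>)) \<longlonglongrightarrow> L s" for s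
  proof (cases "\<phi> s = 0")
    case False
    then obtain n where n: "inverse (real (Suc n)) < \<bar>\<phi> s\<bar>"
      using reals_Archimedean[of "\<bar>\<phi> s\<bar>"] by auto
    have "max 0 (1 - real (Suc j) * \<bar>\<phi> s\<bar>) = 0" if "n \<le> j" for j
    proof -
      have "1 < real (Suc n) * \<bar>\<phi> s\<bar>"
        using n by (simp add: field_simps)
      also have "\<dots> \<le> real (Suc j) * \<bar>\<phi> s\<bar>"
        using that by (intro mult_right_mono) auto
      finally show ?thesis by simp
    qed
    with False show ?thesis
      unfolding L_def by (intro tendsto_eventually eventually_sequentiallyI) auto
  qed (simp add: L_def)
  then have "(\<lambda>j. integral {a..b} (\<lambda>s. max 0 (1 - real (Suc j) * \<bar>\<phi> s\<bar>))) \<longlonglongrightarrow> integral {a..b} L"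
    using \<phi> by (intro dominated_convergence(2)[where h="\<lambda>_. 1"])
      (auto intro!: integrable_continuous_real continuous_intros)
  moreover have "(L has_integral 0) {a..b}"
    by (rule has_integral_spike_finite[OF fin _ has_integral_0]) (auto simp: L_def)
  ultimately show ?thesis
    by (simp add: integral_unique)
qed

lemma tendsto_zero_split_bound:
  fixes f a b c :: "nat \<Rightarrow> real"
  assumes nonneg: "\<And>k. 0 \<le> f k" and bound: "\<And>k j. f k \<le> c j * a k + b j"
    and a: "a \<longlonglongrightarrow> 0" and b: "b \<longlonglongrightarrow> 0"
  shows "f \<longlonglongrightarrow> 0"
proof (rule order_tendstoI)
  fix \<eta> :: real assume "0 < \<eta>"
  have "eventually (\<lambda>j. b j < \<eta> / 2) sequentially"
    by (rule order_tendstoD(2)[OF b]) (use \<open>0 < \<eta>\<close> in simp)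
  then obtain j where j: "b j < \<eta> / 2"
    unfolding eventually_sequentially by blast
  have "eventually (\<lambda>k. c j * a k < \<eta> / 2) sequentially"
    by (rule order_tendstoD(2)[OF tendsto_mult_right_zero[OF a]]) (use \<open>0 < \<eta>\<close> in simp)
  then show "eventually (\<lambda>k. f k < \<eta>) sequentially"
  proof (rule eventually_mono)
    fix k assume "c j * a k < \<eta> / 2"
    with bound[of k j] j show "f k < \<eta>"
      by linarith
  qed
next
  fix \<eta> :: real assume "\<eta> < 0"
  with nonneg show "eventually (\<lambda>k. \<eta> < f k) sequentially"
    by (intro always_eventually allI) (rule less_le_trans)
qed

lemma abs_le_weighted_bump:
  fixes g d C :: real
  assumes aligned: "g * d = \<bar>g\<bar> * \<bar>d\<bar>" and bounded: "\<bar>d\<bar> \<le> C"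
  shows "\<bar>d\<bar> \<le> real (Suc j) * (g * d) + C * max 0 (1 - real (Suc j) * \<bar>g\<bar>)"
proof (cases "1 \<le> real (Suc j) * \<bar>g\<bar>")
  case True
  then have "\<bar>d\<bar> \<le> real (Suc j) * \<bar>g\<bar> * \<bar>d\<bar>"
    by (simp add: mult_le_cancel_right1)
  with True aligned show ?thesis
    by simp
next
  case False
  then have "\<bar>d\<bar> * (1 - real (Suc j) * \<bar>g\<bar>) \<le> C * (1 - real (Suc j) * \<bar>g\<bar>)"
    using bounded by (intro mult_right_mono) auto
  with False aligned show ?thesis
    by (simp add: algebra_simps)
qed

text \<open>Where \<open>\<bar>g\<bar> \<ge> 1 / (j + 1)\<close> the weighted integral controls \<open>\<bar>d\<bar>\<close>; the rest of the interval
  is small because \<open>g\<close> has only finitely many zeros.\<close>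

lemma integral_abs_tendsto_0:
  fixes g :: "real \<Rightarrow> real" and d :: "nat \<Rightarrow> real \<Rightarrow> real"
  assumes g: "continuous_on {a..b} g" and fin: "finite {s\<in>{a..b}. g s = 0}"
    and aligned: "\<And>k s. s \<in> {a..b} \<Longrightarrow> g s * d k s = \<bar>g s\<bar> * \<bar>d k s\<bar>"
    and bounded: "\<And>k s. s \<in> {a..b} \<Longrightarrow> \<bar>d k s\<bar> \<le> C"
    and int_gd: "\<And>k. (\<lambda>s. g s * d k s) integrable_on {a..b}"
    and int_d: "\<And>k. (\<lambda>s. \<bar>d k s\<bar>) integrable_on {a..b}"
    and lim: "(\<lambda>k. integral {a..b} (\<lambda>s. g s * d k s)) \<longlonglongrightarrow> 0"
  shows "(\<lambda>k. integral {a..b} (\<lambda>s. \<bar>d k s\<bar>)) \<longlonglongrightarrow> 0"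
proof (rule tendsto_zero_split_bound[OF _ _ lim])
  define h where "h j s = max 0 (1 - real (Suc j) * \<bar>g s\<bar>)" for j s
  have int_h: "h j integrable_on {a..b}" for j
    unfolding h_def using g by (intro integrable_continuous_real continuous_intros)
  show "integral {a..b} (\<lambda>s. \<bar>d k s\<bar>)
      \<le> real (Suc j) * integral {a..b} (\<lambda>s. g s * d k s) + C * integral {a..b} (h j)" for k j
  proof -
    have "integral {a..b} (\<lambda>s. \<bar>d k s\<bar>)
        \<le> integral {a..b} (\<lambda>s. real (Suc j) * (g s * d k s) + C * h j s)"
      using int_d int_gd int_h aligned bounded unfolding h_def
      by (intro integral_le integrable_add integrable_on_mult_right abs_le_weighted_bump) auto
    also have "\<dots> = real (Suc j) * integral {a..b} (\<lambda>s. g s * d k s) + C * integral {a..b} (h j)"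
      using int_gd int_h by (simp add: integral_add integrable_on_mult_right)
    finally show ?thesis .
  qed
  show "(\<lambda>j. C * integral {a..b} (h j)) \<longlonglongrightarrow> 0"
    unfolding h_def by (intro tendsto_mult_right_zero integral_bump_tendsto_0 g fin)
qed (use int_d in \<open>simp add: integral_nonneg\<close>)

definition admissible_inputs :: "real \<Rightarrow> (real \<Rightarrow> real) \<Rightarrow> (real \<Rightarrow> real) \<Rightarrow> (real \<Rightarrow> real) set" where
  "admissible_inputs t lo hi = {u. continuous_on {0..t} u \<and> (\<forall>s\<in>{0..t}. lo s \<le> u s \<and> u s \<le> hi s)}"

lemma convex_input_image:
  fixes \<Xi> :: "real \<Rightarrow> 'a::euclidean_space"
  assumes \<Xi>: "continuous_on {0..t} \<Xi>"
  shows "convex ((\<lambda>u. c + integral {0..t} (\<lambda>s. u s *\<^sub>R \<Xi> s)) ` admissible_inputs t lo hi)"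
proof (rule convexI)
  fix p q and a b :: real
  assume "p \<in> (\<lambda>u. c + integral {0..t} (\<lambda>s. u s *\<^sub>R \<Xi> s)) ` admissible_inputs t lo hi"
    and "q \<in> (\<lambda>u. c + integral {0..t} (\<lambda>s. u s *\<^sub>R \<Xi> s)) ` admissible_inputs t lo hi"
    and ab: "0 \<le> a" "0 \<le> b" "a + b = 1"
  then obtain u\<^sub>1 u\<^sub>2 where u\<^sub>1: "u\<^sub>1 \<in> admissible_inputs t lo hi" "p = c + integral {0..t} (\<lambda>s. u\<^sub>1 s *\<^sub>R \<Xi> s)"
    and u\<^sub>2: "u\<^sub>2 \<in> admissible_inputs t lo hi" "q = c + integral {0..t} (\<lambda>s. u\<^sub>2 s *\<^sub>R \<Xi> s)"
    by blast
  define u where "u s = a * u\<^sub>1 s + b * u\<^sub>2 s" for s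
  have int: "(\<lambda>s. v s *\<^sub>R \<Xi> s) integrable_on {0..t}" if "v \<in> admissible_inputs t lo hi" for v
    using that \<Xi> unfolding admissible_inputs_def
    by (intro integrable_continuous_real continuous_intros) auto
  have "lo s \<le> u s \<and> u s \<le> hi s" if "s \<in> {0..t}" for s
  proof -
    have "(a + b) * lo s \<le> u s" "u s \<le> (a + b) * hi s"
      using u\<^sub>1(1) u\<^sub>2(1) ab that unfolding admissible_inputs_def u_def distrib_right
      by (auto intro!: add_mono mult_left_mono)
    with ab(3) show ?thesis by simp
  qed
  with u\<^sub>1(1) u\<^sub>2(1) have "u \<in> admissible_inputs t lo hi"
    unfolding admissible_inputs_def u_def by (auto intro!: continuous_intros)
  moreover have "a *\<^sub>R (c + integral {0..t} (\<lambda>s. u\<^sub>1 s *\<^sub>R \<Xi> s)) + b *\<^sub>R (c + integral {0..t} (\<lambda>s. u\<^sub>2 s *\<^sub>R \<Xi> s))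
      = c + integral {0..t} (\<lambda>s. u s *\<^sub>R \<Xi> s)"
  proof -
    have "(\<lambda>s. u s *\<^sub>R \<Xi> s) = (\<lambda>s. a *\<^sub>R (u\<^sub>1 s *\<^sub>R \<Xi> s) + b *\<^sub>R (u\<^sub>2 s *\<^sub>R \<Xi> s))"
      by (simp add: u_def fun_eq_iff scaleR_add_left)
    then have "integral {0..t} (\<lambda>s. u s *\<^sub>R \<Xi> s)
        = a *\<^sub>R integral {0..t} (\<lambda>s. u\<^sub>1 s *\<^sub>R \<Xi> s) + b *\<^sub>R integral {0..t} (\<lambda>s. u\<^sub>2 s *\<^sub>R \<Xi> s)"
      using integral_add[OF integrable_cmul[OF int[OF u\<^sub>1(1)]] integrable_cmul[OF int[OF u\<^sub>2(1)]]]
      by (simp only: integral_cmul)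
    moreover have "a *\<^sub>R c + b *\<^sub>R c = c"
      using ab(3) by (simp flip: scaleR_add_left)
    ultimately show ?thesis
      by (simp add: scaleR_add_right)
  qed
  ultimately show "a *\<^sub>R p + b *\<^sub>R q \<in> (\<lambda>u. c + integral {0..t} (\<lambda>s. u s *\<^sub>R \<Xi> s)) ` admissible_inputs t lo hi"
    unfolding u\<^sub>1(2) u\<^sub>2(2) by (intro image_eqI) auto
qed

(* \<Xi> s plays the role of \<xi> (t - s); y is the direction to be maximised over the responses. *)

lemma convex_frontier_supporting:
  fixes S :: "'a::euclidean_space set"
  assumes S: "convex S" and x: "x \<in> frontier S"
  obtains a where "a \<noteq> 0" "\<And>y. y \<in> S \<Longrightarrow> a \<bullet> y \<le> a \<bullet> x"
proof (cases "interior S = {}")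
  case True
  then obtain a b where a: "a \<noteq> 0" "S \<subseteq> {x. a \<bullet> x = b}"
    using empty_interior_subset_hyperplane[OF S] by metis
  have "closure S \<subseteq> {x. a \<bullet> x = b}"
    using a(2) by (intro closure_minimal) (auto simp: closed_hyperplane)
  moreover have "x \<in> closure S"
    using x by (simp add: frontier_def)
  ultimately have "a \<bullet> x = b"
    by blast
  with a(2) have "a \<bullet> y \<le> a \<bullet> x" if "y \<in> S" for y
    using that by auto
  with a(1) show ?thesis
    by (rule that)
next
  case False
  then have "rel_interior S = interior S"
    using interior_rel_interior_gen[of S] by (metis interior_rel_interior)
  with x have "x \<in> closure S" "x \<notin> rel_interior S"
    by (auto simp: frontier_def)
  then obtain a where "a \<noteq> 0" "\<And>y. y \<in> closure S \<Longrightarrow> a \<bullet> x \<le> a \<bullet> y"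
    using supporting_hyperplane_relative_frontier[OF S] by metis
  then show ?thesis
    by (intro that[of "-a"]) (auto intro: closure_subset[THEN subsetD])
qed

locale bang_bang_problem =
  fixes t :: real and lo hi :: "real \<Rightarrow> real" and \<Xi> :: "real \<Rightarrow> 'a::euclidean_space" and y :: 'a
  assumes continuous_lo: "continuous_on {0..t} lo" and continuous_hi: "continuous_on {0..t} hi"
    and lo_le_hi: "\<And>s. s \<in> {0..t} \<Longrightarrow> lo s \<le> hi s"
    and continuous_\<Xi>: "continuous_on {0..t} \<Xi>"
    and finite_switches: "finite {s\<in>{0..t}. y \<bullet> \<Xi> s = 0}"
begin

definition response :: "(real \<Rightarrow> real) \<Rightarrow> 'a" where
  "response u = integral {0..t} (\<lambda>s. u s *\<^sub>R \<Xi> s)"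

definition optimal_input :: "real \<Rightarrow> real" where
  "optimal_input s = bang_bang (lo s) (hi s) (y \<bullet> \<Xi> s)"

lemma continuous_switching: "continuous_on {0..t} (\<lambda>s. y \<bullet> \<Xi> s)"
  using continuous_\<Xi> by (intro continuous_intros)

lemma integrable_optimal_input_comp:
  fixes H :: "real \<Rightarrow> real \<Rightarrow> 'b::banach"
  assumes "\<And>v. continuous_on {0..t} (\<lambda>s. H s ((hi s + lo s) / 2 + (hi s - lo s) / 2 * v))"
  shows "(\<lambda>s. H s (optimal_input s)) integrable_on {0..t}"
  using integrable_sgn_comp[OF continuous_switching finite_switches assms]
  by (simp add: optimal_input_def bang_bang_def)

lemma
  assumes u: "continuous_on {0..t} u"
  shows integrable_optimal_diff: "(\<lambda>s. (optimal_input s - u s) *\<^sub>R \<Xi> s) integrable_on {0..t}"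
    and integrable_switching_optimal_diff:
      "(\<lambda>s. (y \<bullet> \<Xi> s) * (optimal_input s - u s)) integrable_on {0..t}"
    and integrable_abs_optimal_diff: "(\<lambda>s. \<bar>optimal_input s - u s\<bar>) integrable_on {0..t}"
  using continuous_lo continuous_hi continuous_\<Xi> u
  by (auto intro!: integrable_optimal_input_comp[where H="\<lambda>s v. (v - u s) *\<^sub>R \<Xi> s"]
      integrable_optimal_input_comp[where H="\<lambda>s v. (y \<bullet> \<Xi> s) * (v - u s)"]
      integrable_optimal_input_comp[where H="\<lambda>s v. \<bar>v - u s\<bar>"] continuous_intros)

lemma response_optimal_diff:
  assumes u: "continuous_on {0..t} u"
  shows "response optimal_input - response u = integral {0..t} (\<lambda>s. (optimal_input s - u s) *\<^sub>R \<Xi> s)"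
proof -
  have "(\<lambda>s. u s *\<^sub>R \<Xi> s) integrable_on {0..t}"
    using u continuous_\<Xi> by (intro integrable_continuous_real continuous_intros)
  moreover have "(\<lambda>s. optimal_input s *\<^sub>R \<Xi> s) integrable_on {0..t}"
    using integrable_optimal_diff[of "\<lambda>_. 0"] by simp
  ultimately show ?thesis
    unfolding response_def by (simp add: integral_diff scaleR_diff_left)
qed

lemma inner_response_gap:
  assumes u: "continuous_on {0..t} u"
  shows "y \<bullet> response optimal_input - y \<bullet> response u
    = integral {0..t} (\<lambda>s. (y \<bullet> \<Xi> s) * (optimal_input s - u s))"
proof -
  have "y \<bullet> response optimal_input - y \<bullet> response u = y \<bullet> (response optimal_input - response u)"
    by (simp add: inner_diff_right)
  also have "\<dots> = integral {0..t} (\<lambda>s. (optimal_input s - u s) *\<^sub>R \<Xi> s) \<bullet> y"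
    by (simp add: response_optimal_diff[OF u] inner_commute)
  also have "\<dots> = integral {0..t} (\<lambda>s. ((optimal_input s - u s) *\<^sub>R \<Xi> s) \<bullet> y)"
    by (rule integral_component_eq[symmetric, OF integrable_optimal_diff[OF u]])
  also have "\<dots> = integral {0..t} (\<lambda>s. (y \<bullet> \<Xi> s) * (optimal_input s - u s))"
    by (simp add: inner_commute mult.commute)
  finally show ?thesis .
qed

lemma inner_response_le_optimal:
  assumes u: "u \<in> admissible_inputs t lo hi"
  shows "y \<bullet> response u \<le> y \<bullet> response optimal_input"
proof -
  have cont_u: "continuous_on {0..t} u"
    using u by (simp add: admissible_inputs_def)
  have "0 \<le> integral {0..t} (\<lambda>s. (y \<bullet> \<Xi> s) * (optimal_input s - u s))"
    by (rule integral_nonneg[OF integrable_switching_optimal_diff[OF cont_u]])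
      (use u bang_bang_gap(1) in \<open>auto simp: admissible_inputs_def optimal_input_def\<close>)
  with u show ?thesis
    using inner_response_gap unfolding admissible_inputs_def by fastforce
qed

(* The saturated inputs smoothed_bang_bang with slope k are admissible and lose at most c / k. *)

lemma inner_response_optimal_le:
  assumes bound: "\<And>u. u \<in> admissible_inputs t lo hi \<Longrightarrow> y \<bullet> response u \<le> M"
  shows "y \<bullet> response optimal_input \<le> M"
proof -
  define c where "c = integral {0..t} (\<lambda>s. (hi s - lo s) / 2)"
  have "y \<bullet> response optimal_input \<le> M + c * inverse (real (Suc j))" for j
  proof -
    define k where "k = real (Suc j)"
    define u where "u s = smoothed_bang_bang (lo s) (hi s) k (y \<bullet> \<Xi> s)" for s
    have "u \<in> admissible_inputs t lo hi"
      using continuous_lo continuous_hi continuous_\<Xi> lo_le_hi smoothed_bang_bang_bounds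
      unfolding admissible_inputs_def u_def smoothed_bang_bang_def
      by (auto intro!: continuous_intros)
    then have cont_u: "continuous_on {0..t} u"
      by (simp add: admissible_inputs_def)
    have "y \<bullet> response optimal_input - y \<bullet> response u
        \<le> integral {0..t} (\<lambda>s. inverse k * ((hi s - lo s) / 2))"
      unfolding inner_response_gap[OF cont_u]
    proof (rule integral_le)
      show "(\<lambda>s. (y \<bullet> \<Xi> s) * (optimal_input s - u s)) integrable_on {0..t}"
        using cont_u by (rule integrable_switching_optimal_diff)
      show "(\<lambda>s. inverse k * ((hi s - lo s) / 2)) integrable_on {0..t}"
        using continuous_lo continuous_hi by (intro integrable_continuous_real continuous_intros) auto
      show "(y \<bullet> \<Xi> s) * (optimal_input s - u s) \<le> inverse k * ((hi s - lo s) / 2)"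
        if "s \<in> {0..t}" for s
        using smoothed_bang_bang_gap[OF lo_le_hi[OF that], of k "y \<bullet> \<Xi> s"]
        unfolding optimal_input_def u_def k_def by (simp add: field_simps)
    qed
    also have "\<dots> = c * inverse k"
      unfolding c_def by (simp add: mult.commute)
    finally show ?thesis
      using bound[OF \<open>u \<in> admissible_inputs t lo hi\<close>] unfolding k_def by linarith
  qed
  moreover have "(\<lambda>j. M + c * inverse (real (Suc j))) \<longlonglongrightarrow> M + c * 0"
    by (intro tendsto_intros LIMSEQ_inverse_real_of_nat)
  ultimately show ?thesis
    by (intro LIMSEQ_le_const[of _ M]) auto
qed

lemma norm_response_optimal_diff_le:
  assumes u: "continuous_on {0..t} u" and B: "\<And>s. s \<in> {0..t} \<Longrightarrow> norm (\<Xi> s) \<le> B"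
  shows "norm (response optimal_input - response u) \<le> integral {0..t} (\<lambda>s. \<bar>optimal_input s - u s\<bar>) * B"
proof -
  have "norm (response optimal_input - response u) \<le> integral {0..t} (\<lambda>s. \<bar>optimal_input s - u s\<bar> * B)"
    unfolding response_optimal_diff[OF u]
    by (rule integral_norm_bound_integral[OF integrable_optimal_diff[OF u]
          integrable_on_mult_left[OF integrable_abs_optimal_diff[OF u]]])
      (use B in \<open>auto intro: mult_left_mono\<close>)
  then show ?thesis
    by simp
qed

lemma response_tendsto_optimal:
  assumes U: "\<And>k. U k \<in> admissible_inputs t lo hi"
    and lim: "(\<lambda>k. y \<bullet> response (U k)) \<longlonglongrightarrow> y \<bullet> response optimal_input"
  shows "(\<lambda>k. response (U k)) \<longlonglongrightarrow> response optimal_input"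
proof -
  have cont_U: "continuous_on {0..t} (U k)" for k
    using U by (simp add: admissible_inputs_def)
  have "continuous_on {0..t} (\<lambda>s. hi s - lo s)"
    using continuous_lo continuous_hi by (intro continuous_intros)
  then obtain C where C: "\<And>s. s \<in> {0..t} \<Longrightarrow> norm (hi s - lo s) \<le> C"
    using continuous_on_compact_bound[OF compact_Icc] by blast
  obtain B where B: "\<And>s. s \<in> {0..t} \<Longrightarrow> norm (\<Xi> s) \<le> B"
    using continuous_on_compact_bound[OF compact_Icc continuous_\<Xi>] by blast
  have "(\<lambda>k. integral {0..t} (\<lambda>s. \<bar>optimal_input s - U k s\<bar>)) \<longlonglongrightarrow> 0"
  proof (rule integral_abs_tendsto_0[OF continuous_switching finite_switches])
    fix k s assume s: "s \<in> {0..t}"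
    with U[of k] show "(y \<bullet> \<Xi> s) * (optimal_input s - U k s) = \<bar>y \<bullet> \<Xi> s\<bar> * \<bar>optimal_input s - U k s\<bar>"
      using bang_bang_gap(1) by (auto simp: admissible_inputs_def optimal_input_def)
    from s U[of k] have "\<bar>optimal_input s - U k s\<bar> \<le> hi s - lo s"
      using bang_bang_gap(2) by (auto simp: admissible_inputs_def optimal_input_def)
    with C[OF s] show "\<bar>optimal_input s - U k s\<bar> \<le> C"
      by simp
  next
    show "(\<lambda>k. integral {0..t} (\<lambda>s. (y \<bullet> \<Xi> s) * (optimal_input s - U k s))) \<longlonglongrightarrow> 0"
      using tendsto_diff[OF tendsto_const[of "y \<bullet> response optimal_input"] lim]
      by (simp add: inner_response_gap[OF cont_U, symmetric])
  qed (use cont_U integrable_switching_optimal_diff integrable_abs_optimal_diff in auto)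
  then have "(\<lambda>k. response optimal_input - response (U k)) \<longlonglongrightarrow> 0"
    by (rule Lim_null_comparison[OF always_eventually tendsto_mult_left_zero, rotated])
      (use norm_response_optimal_diff_le[OF cont_U B] in blast)
  from tendsto_diff[OF tendsto_const[of "response optimal_input"] this] show ?thesis
    by simp
qed

lemma supporting_point_eq_optimal:
  assumes x: "x \<in> closure ((\<lambda>u. c + response u) ` admissible_inputs t lo hi)"
    and supporting: "\<And>u. u \<in> admissible_inputs t lo hi \<Longrightarrow> y \<bullet> (c + response u) \<le> y \<bullet> x"
  shows "x = c + response optimal_input"
proof -
  obtain X where X: "\<And>k. X k \<in> (\<lambda>u. c + response u) ` admissible_inputs t lo hi" "X \<longlonglongrightarrow> x"
    using x unfolding closure_sequential by blast
  then have "\<forall>k. \<exists>u. u \<in> admissible_inputs t lo hi \<and> X k = c + response u"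
    by blast
  then obtain U where U: "\<And>k. U k \<in> admissible_inputs t lo hi" "\<And>k. X k = c + response (U k)"
    by metis
  have "y \<bullet> response optimal_input \<le> y \<bullet> (x - c)"
  proof (rule inner_response_optimal_le)
    fix u assume "u \<in> admissible_inputs t lo hi"
    from supporting[OF this] show "y \<bullet> response u \<le> y \<bullet> (x - c)"
      by (simp add: inner_diff_right inner_add_right)
  qed
  have lim_X: "(\<lambda>k. response (U k)) \<longlonglongrightarrow> x - c"
    using tendsto_diff[OF X(2) tendsto_const[of c]] by (simp add: U(2))
  then have lim_y: "(\<lambda>k. y \<bullet> response (U k)) \<longlonglongrightarrow> y \<bullet> (x - c)"
    by (intro tendsto_intros)
  moreover have "y \<bullet> response (U k) \<le> y \<bullet> response optimal_input" for k
    using U(1) by (rule inner_response_le_optimal)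
  ultimately have "y \<bullet> (x - c) \<le> y \<bullet> response optimal_input"
    by (intro LIMSEQ_le_const2) auto
  with \<open>y \<bullet> response optimal_input \<le> y \<bullet> (x - c)\<close> lim_y
  have "(\<lambda>k. y \<bullet> response (U k)) \<longlonglongrightarrow> y \<bullet> response optimal_input"
    by simp
  from LIMSEQ_unique[OF lim_X response_tendsto_optimal[OF U(1) this]] show ?thesis
    by (simp add: algebra_simps)
qed

lemma response_optimal_input_partition:
  assumes P: "alternating_partition (\<lambda>s. y \<bullet> \<Xi> s) N \<sigma> \<epsilon>" and "\<sigma> 0 = 0" "\<sigma> N = t"
  shows "response optimal_input = integral {0..t} (\<lambda>s. ((hi s + lo s) / 2) *\<^sub>R \<Xi> s)
    + \<epsilon> *\<^sub>R (\<Sum>i<N. (-1) ^ i *\<^sub>R integral {\<sigma> i..\<sigma> (Suc i)} (\<lambda>s. ((hi s - lo s) / 2) *\<^sub>R \<Xi> s))"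
proof -
  have "continuous_on {\<sigma> 0..\<sigma> N} (\<lambda>s. ((hi s - lo s) / 2 * v) *\<^sub>R \<Xi> s)" for v
    using continuous_lo continuous_hi continuous_\<Xi> assms(2,3) by (auto intro!: continuous_intros)
  from has_integral_sgn_partition[OF P _ this] finite_switches assms(2,3)
  have "((\<lambda>s. ((hi s - lo s) / 2 * sgn (y \<bullet> \<Xi> s)) *\<^sub>R \<Xi> s) has_integral
      (\<Sum>i<N. integral {\<sigma> i..\<sigma> (Suc i)} (\<lambda>s. ((hi s - lo s) / 2 * (\<epsilon> * (-1) ^ i)) *\<^sub>R \<Xi> s))) {0..t}"
    by simp
  also have "(\<Sum>i<N. integral {\<sigma> i..\<sigma> (Suc i)} (\<lambda>s. ((hi s - lo s) / 2 * (\<epsilon> * (-1) ^ i)) *\<^sub>R \<Xi> s))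
      = \<epsilon> *\<^sub>R (\<Sum>i<N. (-1) ^ i *\<^sub>R integral {\<sigma> i..\<sigma> (Suc i)} (\<lambda>s. ((hi s - lo s) / 2) *\<^sub>R \<Xi> s))"
  proof -
    have "integral {\<sigma> i..\<sigma> (Suc i)} (\<lambda>s. ((hi s - lo s) / 2 * (\<epsilon> * (-1) ^ i)) *\<^sub>R \<Xi> s)
        = (\<epsilon> * (-1) ^ i) *\<^sub>R integral {\<sigma> i..\<sigma> (Suc i)} (\<lambda>s. ((hi s - lo s) / 2) *\<^sub>R \<Xi> s)" for i
    proof -
      have "(\<lambda>s. ((hi s - lo s) / 2 * (\<epsilon> * (-1) ^ i)) *\<^sub>R \<Xi> s)
          = (\<lambda>s. (\<epsilon> * (-1) ^ i) *\<^sub>R (((hi s - lo s) / 2) *\<^sub>R \<Xi> s))"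
        by (simp add: fun_eq_iff mult.commute)
      then show ?thesis
        by (simp only: integral_cmul)
    qed
    then show ?thesis
      by (simp add: scaleR_sum_right)
  qed
  finally have switching_part: "((\<lambda>s. ((hi s - lo s) / 2 * sgn (y \<bullet> \<Xi> s)) *\<^sub>R \<Xi> s) has_integral
      \<epsilon> *\<^sub>R (\<Sum>i<N. (-1) ^ i *\<^sub>R integral {\<sigma> i..\<sigma> (Suc i)} (\<lambda>s. ((hi s - lo s) / 2) *\<^sub>R \<Xi> s))) {0..t}" .
  have "((\<lambda>s. ((hi s + lo s) / 2) *\<^sub>R \<Xi> s) has_integral integral {0..t} (\<lambda>s. ((hi s + lo s) / 2) *\<^sub>R \<Xi> s)) {0..t}"
    using continuous_lo continuous_hi continuous_\<Xi>
    by (intro integrable_integral integrable_continuous_real continuous_intros) auto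
  from has_integral_add[OF this switching_part] show ?thesis
    unfolding response_def optimal_input_def bang_bang_def
    by (simp add: scaleR_add_left integral_unique)
qed

end

section \<open>The integrator chain\<close>

lemma pos_less_card: "pos (k::'n::{finite,wellorder}) < CARD('n)"
proof -
  have "{j. j < k} \<subset> (UNIV :: 'n set)"
    by auto
  then show ?thesis
    unfolding pos_def by (simp add: psubset_card_mono)
qed

lemma strict_mono_pos: "strict_mono (pos :: 'n::{finite,wellorder} \<Rightarrow> nat)"
  unfolding strict_mono_def pos_def by (auto intro!: psubset_card_mono)

lemma pos_eq_iff [simp]: "pos (j::'n::{finite,wellorder}) = pos k \<longleftrightarrow> j = k"
  using strict_mono_eq[OF strict_mono_pos] .

lemma range_pos: "range (pos :: 'n::{finite,wellorder} \<Rightarrow> nat) = {..<CARD('n)}"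
proof -
  have "inj (pos :: 'n \<Rightarrow> nat)"
    by (simp add: inj_on_def)
  then have "card (range (pos :: 'n \<Rightarrow> nat)) = CARD('n)"
    by (simp add: card_image)
  moreover have "range (pos :: 'n \<Rightarrow> nat) \<subseteq> {..<CARD('n)}"
    using pos_less_card by auto
  ultimately show ?thesis
    by (simp add: card_subset_eq)
qed

definition pos_inv :: "nat \<Rightarrow> 'n::{finite,wellorder}" where
  "pos_inv = inv pos"

lemma pos_pos_inv: "j < CARD('n) \<Longrightarrow> pos (pos_inv j :: 'n::{finite,wellorder}) = j"
  unfolding pos_inv_def by (metis f_inv_into_f lessThan_iff range_pos)

lemma pos_inv_pos [simp]: "pos_inv (pos k) = (k::'n::{finite,wellorder})"
  unfolding pos_inv_def by (simp add: inj_on_def)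

lemma Aint_mult_nth:
  fixes x :: "'n::{finite,wellorder} rvec"
  shows "(Aint *v x) $ i = (if Suc (pos i) < CARD('n) then x $ pos_inv (Suc (pos i)) else 0)"
proof (cases "Suc (pos i) < CARD('n)")
  case True
  then have "pos j = Suc (pos i) \<longleftrightarrow> j = pos_inv (Suc (pos i))" for j :: 'n
    by (metis pos_inv_pos pos_pos_inv)
  moreover have "pos i < CARD('n) - 1"
    using True by linarith
  ultimately show ?thesis
    unfolding matrix_vector_mult_def Aint_def
    by (simp add: if_distrib[of "\<lambda>z. z * _"] cong: if_cong)
next
  case False
  then have "\<not> pos i < CARD('n) - 1"
    by linarith
  with False show ?thesis
    unfolding matrix_vector_mult_def Aint_def by simp
qed

lemma bcon_nth: "(bcon :: 'n::{finite,wellorder} rvec) $ i = (if pos i = CARD('n) - 1 then 1 else 0)"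
  unfolding bcon_def by simp

(* Entry (k, l) of the transition matrix exp (r A_int). *)

definition int_flow :: "'n::{finite,wellorder} \<Rightarrow> 'n \<Rightarrow> real \<Rightarrow> real" where
  "int_flow k l r = (if pos k \<le> pos l then r ^ (pos l - pos k) / fact (pos l - pos k) else 0)"

definition int_flow_deriv :: "'n::{finite,wellorder} \<Rightarrow> 'n \<Rightarrow> real \<Rightarrow> real" where
  "int_flow_deriv k l r = (if pos k < pos l then r ^ (pos l - pos k - 1) / fact (pos l - pos k - 1) else 0)"

lemma int_flow_has_derivative: "(int_flow k l has_real_derivative int_flow_deriv k l r) (at r)"
proof (cases "pos k < pos l")
  case True
  then obtain m where m: "pos l - pos k = Suc m"
    by (metis Suc_diff_Suc)
  have "((\<lambda>r. r ^ Suc m) has_real_derivative real (Suc m) * r ^ m) (at r)"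
    using DERIV_pow[of "Suc m" r] by simp
  then have "((\<lambda>r. r ^ Suc m / fact (Suc m)) has_real_derivative real (Suc m) * r ^ m / fact (Suc m)) (at r)"
    by (rule DERIV_cdivide)
  moreover have "real (Suc m) * r ^ m / fact (Suc m) = r ^ m / fact m"
    by (simp add: fact_Suc del: of_nat_Suc)
  ultimately show ?thesis
    using True m unfolding int_flow_def int_flow_deriv_def by simp
next
  case False
  then have "int_flow k l = (\<lambda>_. if k = l then 1 else 0)"
    unfolding int_flow_def by (auto simp: fun_eq_iff)
  with False show ?thesis
    unfolding int_flow_deriv_def by simp
qed

lemma int_flow_0: "int_flow k l 0 = (if l = k then 1 else 0)"
  unfolding int_flow_def by (auto simp: le_less)

lemma int_flow_bcon: "(\<Sum>l\<in>UNIV. int_flow k l r * (bcon :: 'n::{finite,wellorder} rvec) $ l) = (xi r :: 'n rvec) $ k"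
proof -
  define L where "L = (pos_inv (CARD('n) - 1) :: 'n)"
  have pos_L: "pos L = CARD('n) - 1"
    unfolding L_def by (simp add: pos_pos_inv)
  then have "pos l = CARD('n) - 1 \<longleftrightarrow> l = L" for l :: 'n
    by (metis pos_eq_iff)
  then have "(\<Sum>l\<in>UNIV. int_flow k l r * (bcon :: 'n rvec) $ l) = int_flow k L r"
    by (simp add: bcon_nth if_distrib[of "\<lambda>z. _ * z"] cong: if_cong)
  also have "\<dots> = (xi r :: 'n rvec) $ k"
    unfolding int_flow_def xi_def using pos_L pos_less_card[of k] by simp
  finally show ?thesis .
qed

lemma int_flow_Aint:
  fixes x :: "'n::{finite,wellorder} rvec"
  shows "(\<Sum>l\<in>UNIV. int_flow k l r * (Aint *v x) $ l) = (\<Sum>j\<in>UNIV. int_flow_deriv k j r * x $ j)"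
proof -
  let ?A = "{l::'n. Suc (pos l) < CARD('n)}" and ?B = "{j::'n. 0 < pos j}"
  let ?succ = "\<lambda>l::'n. pos_inv (Suc (pos l)) :: 'n"
  have pos_succ: "pos (?succ l) = Suc (pos l)" if "l \<in> ?A" for l
    using that by (simp add: pos_pos_inv)
  have pos_pred: "pos (pos_inv (pos j - 1) :: 'n) = pos j - 1" for j :: 'n
    using pos_less_card[of j] by (simp add: pos_pos_inv)
  have "bij_betw ?succ ?A ?B"
  proof (rule bij_betw_byWitness[where f'="\<lambda>j. pos_inv (pos j - 1)"])
    show "\<forall>l\<in>?A. pos_inv (pos (?succ l) - 1) = l"
      by (simp add: pos_succ)
    show "\<forall>j\<in>?B. ?succ (pos_inv (pos j - 1)) = j"
      using pos_pred by (metis Suc_pred' mem_Collect_eq pos_inv_pos)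
    show "?succ ` ?A \<subseteq> ?B"
      using pos_succ by auto
    show "(\<lambda>j. pos_inv (pos j - 1)) ` ?B \<subseteq> ?A"
      using pos_pred pos_less_card by fastforce
  qed
  have "(\<Sum>l\<in>UNIV. int_flow k l r * (Aint *v x) $ l) = (\<Sum>l\<in>?A. int_flow k l r * x $ ?succ l)"
    by (simp add: Aint_mult_nth sum.inter_filter[symmetric] if_distrib[of "\<lambda>z. _ * z"] cong: if_cong)
  also have "\<dots> = (\<Sum>l\<in>?A. int_flow_deriv k (?succ l) r * x $ ?succ l)"
    by (intro sum.cong refl) (auto simp: int_flow_def int_flow_deriv_def pos_succ)
  also have "\<dots> = (\<Sum>j\<in>?B. int_flow_deriv k j r * x $ j)"
    using sum.reindex_bij_betw[OF \<open>bij_betw ?succ ?A ?B\<close>] by simp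
  also have "\<dots> = (\<Sum>j\<in>UNIV. int_flow_deriv k j r * x $ j)"
    by (intro sum.mono_neutral_left) (auto simp: int_flow_deriv_def)
  finally show ?thesis .
qed

lemma chi_vec_int_flow: "chi_vec t x0 $ k = (\<Sum>l\<in>UNIV. int_flow k l t * x0 $ l)"
  unfolding chi_vec_def int_flow_def
  by (simp add: if_distrib[of "\<lambda>z. z * _"] sum.inter_filter[symmetric] cong: if_cong)

lemma int_flow_solution_deriv:
  fixes x :: "real \<Rightarrow> 'n::{finite,wellorder} rvec"
  assumes x: "(x has_vector_derivative (Aint *v x s + v *\<^sub>R bcon)) (at s within S)"
  shows "((\<lambda>s. \<Sum>l\<in>UNIV. int_flow k l (t - s) * x s $ l) has_real_derivative v * xi (t - s) $ k)
    (at s within S)"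
proof -
  let ?D = "Aint *v x s + v *\<^sub>R bcon"
  have "((\<lambda>s. x s $ l) has_real_derivative ?D $ l) (at s within S)" for l
    using bounded_linear.has_vector_derivative[OF bounded_linear_vec_nth x]
    by (simp add: has_real_derivative_iff_has_vector_derivative)
  moreover have "((\<lambda>s. int_flow k l (t - s)) has_real_derivative - int_flow_deriv k l (t - s)) (at s within S)" for l
  proof -
    have "((\<lambda>s. t - s) has_real_derivative -1) (at s within S)"
      by (auto intro!: derivative_eq_intros)
    from DERIV_chain2[OF int_flow_has_derivative this] show ?thesis
      by simp
  qed
  ultimately have "((\<lambda>s. \<Sum>l\<in>UNIV. int_flow k l (t - s) * x s $ l) has_real_derivative
      (\<Sum>l\<in>UNIV. int_flow k l (t - s) * ?D $ l - int_flow_deriv k l (t - s) * x s $ l)) (at s within S)"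
    by (auto intro!: derivative_eq_intros sum.cong simp: algebra_simps)
  also have "(\<Sum>l\<in>UNIV. int_flow k l (t - s) * ?D $ l - int_flow_deriv k l (t - s) * x s $ l)
      = (\<Sum>l\<in>UNIV. int_flow k l (t - s) * (Aint *v x s) $ l)
        + v * (\<Sum>l\<in>UNIV. int_flow k l (t - s) * bcon $ l)
        - (\<Sum>l\<in>UNIV. int_flow_deriv k l (t - s) * x s $ l)"
    by (simp add: algebra_simps sum.distrib sum_subtractf sum_distrib_left)
  also have "\<dots> = v * xi (t - s) $ k"
    by (simp only: int_flow_Aint int_flow_bcon)
  finally show ?thesis .
qed

lemma integrator_solution_has_integral:
  fixes x :: "real \<Rightarrow> 'n::{finite,wellorder} rvec"
  assumes "0 \<le> t"
    and x: "\<And>s. s \<in> {0..t} \<Longrightarrow> (x has_vector_derivative (Aint *v x s + u s *\<^sub>R bcon)) (at s within {0..t})"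
  shows "((\<lambda>s. u s *\<^sub>R xi (t - s)) has_integral (x t - chi_vec t (x 0))) {0..t}"
proof (subst has_integral_componentwise_iff, intro ballI)
  fix b :: "'n rvec" assume "b \<in> Basis"
  then obtain k where b: "b = axis k 1"
    by (auto simp: Basis_vec_def)
  have "((\<lambda>s. u s * xi (t - s) $ k) has_integral
      (\<Sum>l\<in>UNIV. int_flow k l (t - t) * x t $ l) - (\<Sum>l\<in>UNIV. int_flow k l (t - 0) * x 0 $ l)) {0..t}"
    using assms(1) int_flow_solution_deriv[OF x]
    by (intro fundamental_theorem_of_calculus) (auto simp: has_real_derivative_iff_has_vector_derivative)
  then show "((\<lambda>s. u s *\<^sub>R xi (t - s) \<bullet> b) has_integral (x t - chi_vec t (x 0)) \<bullet> b) {0..t}"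
    by (simp add: b inner_axis int_flow_0 chi_vec_int_flow if_distrib[of "\<lambda>z. z * _"] cong: if_cong)
qed

primrec iter_integral :: "(real \<Rightarrow> real) \<Rightarrow> (nat \<Rightarrow> real) \<Rightarrow> nat \<Rightarrow> real \<Rightarrow> real" where
  "iter_integral u c 0 s = c 0 + integral {0..s} u"
| "iter_integral u c (Suc m) s = c (Suc m) + integral {0..s} (iter_integral u c m)"

lemma iter_integral_0 [simp]: "iter_integral u c m 0 = c m"
  by (cases m) simp_all

lemma continuous_on_iter_integral:
  "continuous_on {0..t} u \<Longrightarrow> continuous_on {0..t} (iter_integral u c m)"
  by (induction m) (simp_all add: continuous_on_add indefinite_integral_continuous_1 integrable_continuous_real)

lemma iter_integral_has_vector_derivative:
  assumes u: "continuous_on {0..t} u" and s: "s \<in> {0..t}"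
  shows "(iter_integral u c m has_vector_derivative (case m of 0 \<Rightarrow> u s | Suc m' \<Rightarrow> iter_integral u c m' s))
    (at s within {0..t})"
proof (cases m)
  case 0
  have "iter_integral u c 0 = (\<lambda>s. c 0 + integral {0..s} u)"
    by (simp add: fun_eq_iff)
  with 0 show ?thesis
    using integral_has_vector_derivative[OF u s]
    by (auto intro!: derivative_eq_intros simp: has_vector_derivative_def)
next
  case (Suc m')
  have "iter_integral u c (Suc m') = (\<lambda>s. c (Suc m') + integral {0..s} (iter_integral u c m'))"
    by (simp add: fun_eq_iff)
  with Suc show ?thesis
    using integral_has_vector_derivative[OF continuous_on_iter_integral[OF u] s]
    by (auto intro!: derivative_eq_intros simp: has_vector_derivative_def)
qed

lemma integrator_solution_exists:
  fixes x0 :: "'n::{finite,wellorder} rvec"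
  assumes u: "continuous_on {0..t} u"
  obtains x where "x 0 = x0"
    "\<And>s. s \<in> {0..t} \<Longrightarrow> (x has_vector_derivative (Aint *v x s + u s *\<^sub>R bcon)) (at s within {0..t})"
proof
  define c where "c m = x0 $ (pos_inv (CARD('n) - 1 - m) :: 'n)" for m
  define x where "x s = (\<chi> k::'n. iter_integral u c (CARD('n) - 1 - pos k) s)" for s
  have rev: "CARD('n) - Suc (CARD('n) - Suc (pos k)) = pos k" for k :: 'n
    using pos_less_card[of k] by linarith
  show "x 0 = x0"
    by (simp add: x_def c_def rev vec_eq_iff)
  fix s assume s: "s \<in> {0..t}"
  show "(x has_vector_derivative (Aint *v x s + u s *\<^sub>R bcon)) (at s within {0..t})"
    unfolding has_vector_derivative_def
  proof (subst has_derivative_componentwise_within, intro ballI)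
    fix b :: "'n rvec" assume "b \<in> Basis"
    then obtain k where b: "b = axis k 1"
      by (auto simp: Basis_vec_def)
    have "(Aint *v x s + u s *\<^sub>R bcon) $ k
        = (case CARD('n) - 1 - pos k of 0 \<Rightarrow> u s | Suc m' \<Rightarrow> iter_integral u c m' s)"
    proof (cases "Suc (pos k) < CARD('n)")
      case True
      then have "CARD('n) - 1 - pos k = Suc (CARD('n) - 1 - pos (pos_inv (Suc (pos k)) :: 'n))"
        by (simp add: pos_pos_inv)
      with True show ?thesis
        by (simp add: Aint_mult_nth bcon_nth x_def)
    next
      case False
      with pos_less_card[of k] show ?thesis
        by (simp add: Aint_mult_nth bcon_nth)
    qed
    with iter_integral_has_vector_derivative[OF u s, of c "CARD('n) - 1 - pos k"]
    show "((\<lambda>s. x s \<bullet> b) has_derivative (\<lambda>h. h *\<^sub>R (Aint *v x s + u s *\<^sub>R bcon) \<bullet> b)) (at s within {0..t})"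
      by (simp add: b inner_axis x_def has_vector_derivative_def)
  qed
qed

lemma int_reach_eq:
  fixes x0 :: "'n::{finite,wellorder} rvec"
  assumes "0 \<le> t"
  shows "int_reach t x0 lo hi
    = (\<lambda>u. chi_vec t x0 + integral {0..t} (\<lambda>s. u s *\<^sub>R xi (t - s))) ` admissible_inputs t lo hi"
proof -
  have repr: "x t = chi_vec t x0 + integral {0..t} (\<lambda>s. u s *\<^sub>R xi (t - s))"
    if "x 0 = x0" "\<And>s. s \<in> {0..t} \<Longrightarrow> (x has_vector_derivative (Aint *v x s + u s *\<^sub>R bcon)) (at s within {0..t})"
    for x :: "real \<Rightarrow> 'n rvec" and u
    using integrator_solution_has_integral[OF assms that(2)] that(1) by (simp add: integral_unique)
  show ?thesis
  proof (intro equalityI subsetI)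
    fix p assume "p \<in> int_reach t x0 lo hi"
    then obtain x u where "p = x t" "u \<in> admissible_inputs t lo hi" "x 0 = x0"
      "\<And>s. s \<in> {0..t} \<Longrightarrow> (x has_vector_derivative (Aint *v x s + u s *\<^sub>R bcon)) (at s within {0..t})"
      unfolding int_reach_def admissible_inputs_def by blast
    with repr show "p \<in> (\<lambda>u. chi_vec t x0 + integral {0..t} (\<lambda>s. u s *\<^sub>R xi (t - s))) ` admissible_inputs t lo hi"
      by blast
  next
    fix p assume "p \<in> (\<lambda>u. chi_vec t x0 + integral {0..t} (\<lambda>s. u s *\<^sub>R xi (t - s))) ` admissible_inputs t lo hi"
    then obtain u where u: "u \<in> admissible_inputs t lo hi" "p = chi_vec t x0 + integral {0..t} (\<lambda>s. u s *\<^sub>R xi (t - s))"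
      by blast
    then obtain x where x: "x 0 = x0"
      "\<And>s. s \<in> {0..t} \<Longrightarrow> (x has_vector_derivative (Aint *v x s + u s *\<^sub>R bcon)) (at s within {0..t})"
      using integrator_solution_exists[of t u] by (auto simp: admissible_inputs_def)
    moreover have "p = x t"
      using repr[of x u] x u(2) by simp
    ultimately show "p \<in> int_reach t x0 lo hi"
      using u(1) unfolding int_reach_def admissible_inputs_def by blast
  qed
qed

lemma inner_xi_zeros:
  fixes y :: "'n::{finite,wellorder} rvec"
  assumes "y \<noteq> 0"
  shows "finite {r. y \<bullet> xi r = 0}" and "card {r. y \<bullet> xi r = 0} < CARD('n)"
proof -
  define m where "m k = CARD('n) - 1 - pos k" for k :: 'n
  define p where "p = (\<Sum>k\<in>UNIV. monom (y $ k / fact (m k)) (m k))"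
  have poly_p: "poly p r = y \<bullet> xi r" for r
    unfolding p_def poly_sum poly_monom inner_vec_def xi_def m_def by (simp add: field_simps)
  have m_eq_iff: "m k = m k' \<longleftrightarrow> k = k'" for k k'
  proof
    assume "m k = m k'"
    then have "pos k = pos k'"
      unfolding m_def using pos_less_card[of k] pos_less_card[of k'] by linarith
    then show "k = k'"
      by simp
  qed simp
  obtain k where k: "y $ k \<noteq> 0"
    using assms by (auto simp: vec_eq_iff)
  have "coeff p (m k) = (\<Sum>k'\<in>UNIV. if k' = k then y $ k' / fact (m k') else 0)"
    unfolding p_def coeff_sum coeff_monom by (intro sum.cong refl) (simp add: m_eq_iff)
  also have "\<dots> = y $ k / fact (m k)"
    by simp
  finally have "p \<noteq> 0"
    using k by auto
  have "degree p \<le> CARD('n) - 1"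
  proof (rule degree_le, intro allI impI)
    fix i assume "CARD('n) - 1 < i"
    then have "m k' \<noteq> i" for k'
      unfolding m_def by linarith
    then show "coeff p i = 0"
      unfolding p_def coeff_sum coeff_monom by simp
  qed
  have zeros: "{r. y \<bullet> xi r = 0} = {r. poly p r = 0}"
    by (simp add: poly_p)
  show "finite {r. y \<bullet> xi r = 0}"
    unfolding zeros by (rule poly_roots_finite[OF \<open>p \<noteq> 0\<close>])
  have "card {r. poly p r = 0} \<le> degree p"
    by (rule card_poly_roots_bound[OF \<open>p \<noteq> 0\<close>])
  moreover have "0 < CARD('n)"
    by simp
  ultimately show "card {r. y \<bullet> xi r = 0} < CARD('n)"
    unfolding zeros using \<open>degree p \<le> CARD('n) - 1\<close> by linarith
qed

lemma inner_xi_reflected_zeros: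
  fixes y :: "'n::{finite,wellorder} rvec"
  assumes "y \<noteq> 0"
  shows "finite {s\<in>S. y \<bullet> xi (t - s) = 0}" and "card {s\<in>S. y \<bullet> xi (t - s) = 0} < CARD('n)"
proof -
  have sub: "{s\<in>S. y \<bullet> xi (t - s) = 0} \<subseteq> (\<lambda>r. t - r) ` {r. y \<bullet> xi r = 0}"
  proof
    fix s assume "s \<in> {s\<in>S. y \<bullet> xi (t - s) = 0}"
    then show "s \<in> (\<lambda>r. t - r) ` {r. y \<bullet> xi r = 0}"
      by (intro image_eqI[of s _ "t - s"]) auto
  qed
  then show fin: "finite {s\<in>S. y \<bullet> xi (t - s) = 0}"
    using inner_xi_zeros(1)[OF assms] by (rule finite_subset[OF _ finite_imageI])
  have "card {s\<in>S. y \<bullet> xi (t - s) = 0} \<le> card ((\<lambda>r. t - r) ` {r. y \<bullet> (xi r :: 'n rvec) = 0})"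
    using sub inner_xi_zeros(1)[OF assms] by (intro card_mono) auto
  also have "\<dots> \<le> card {r. y \<bullet> (xi r :: 'n rvec) = 0}"
    by (rule card_image_le[OF inner_xi_zeros(1)[OF assms]])
  finally show "card {s\<in>S. y \<bullet> xi (t - s) = 0} < CARD('n)"
    using inner_xi_zeros(2)[OF assms] by linarith
qed

lemma frontier_int_reach_bang_bang:
  fixes x0 :: "'n::{finite,wellorder} rvec"
  assumes t: "0 < t" and lo: "continuous_on {0..t} lo" and hi: "continuous_on {0..t} hi"
    and lo_le_hi: "\<And>s. s \<in> {0..t} \<Longrightarrow> lo s \<le> hi s"
    and x: "x \<in> frontier (int_reach t x0 lo hi)"
  shows "\<exists>\<sigma> \<epsilon>. \<epsilon> \<in> {1, -1} \<and> \<sigma> 0 = 0 \<and> \<sigma> CARD('n) = t \<and> (\<forall>i<CARD('n). \<sigma> i \<le> \<sigma> (Suc i)) \<and>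
    x = chi_vec t x0 + integral {0..t} (\<lambda>s. ((hi s + lo s) / 2) *\<^sub>R xi (t - s))
      + \<epsilon> *\<^sub>R (\<Sum>i\<in>{1..CARD('n)}. (-1) ^ (i - 1) *\<^sub>R
          integral {\<sigma> (i - 1)..\<sigma> i} (\<lambda>s. ((hi s - lo s) / 2) *\<^sub>R xi (t - s)))"
proof -
  define \<Xi> where "\<Xi> s = (xi (t - s) :: 'n rvec)" for s
  have continuous_\<Xi>: "continuous_on {0..t} \<Xi>"
    unfolding \<Xi>_def xi_def by (auto intro!: continuous_intros simp: continuous_on_vec_lambda)
  have reach: "int_reach t x0 lo hi
      = (\<lambda>u. chi_vec t x0 + integral {0..t} (\<lambda>s. u s *\<^sub>R \<Xi> s)) ` admissible_inputs t lo hi"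
    unfolding \<Xi>_def using t by (simp add: int_reach_eq)
  have "convex (int_reach t x0 lo hi)"
    unfolding reach by (rule convex_input_image[OF continuous_\<Xi>])
  then obtain y where "y \<noteq> 0" and supporting: "\<And>p. p \<in> int_reach t x0 lo hi \<Longrightarrow> y \<bullet> p \<le> y \<bullet> x"
    using convex_frontier_supporting x by blast
  note zeros = inner_xi_reflected_zeros[OF \<open>y \<noteq> 0\<close>, of _ t, folded \<Xi>_def]
  from lo hi lo_le_hi continuous_\<Xi> zeros(1)[of "{0..t}"] interpret bang_bang_problem t lo hi \<Xi> y
    by unfold_locales
  have "x = chi_vec t x0 + response optimal_input"
  proof (rule supporting_point_eq_optimal)
    show "x \<in> closure ((\<lambda>u. chi_vec t x0 + response u) ` admissible_inputs t lo hi)"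
      using x reach unfolding response_def frontier_def by simp
    show "y \<bullet> (chi_vec t x0 + response u) \<le> y \<bullet> x" if "u \<in> admissible_inputs t lo hi" for u
      using supporting reach that unfolding response_def by simp
  qed
  moreover obtain \<sigma> \<epsilon> where \<sigma>: "\<sigma> 0 = 0" "\<sigma> CARD('n) = t"
    "alternating_partition (\<lambda>s. y \<bullet> \<Xi> s) CARD('n) \<sigma> \<epsilon>"
    using alternating_partition_exists[OF continuous_switching _ zeros(1,2)] t that by fastforce
  moreover have "(\<Sum>i<CARD('n). (-1) ^ i *\<^sub>R integral {\<sigma> i..\<sigma> (Suc i)} (\<lambda>s. ((hi s - lo s) / 2) *\<^sub>R \<Xi> s))
      = (\<Sum>i\<in>{1..CARD('n)}. (-1) ^ (i - 1) *\<^sub>R integral {\<sigma> (i - 1)..\<sigma> i} (\<lambda>s. ((hi s - lo s) / 2) *\<^sub>R \<Xi> s))"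
    by (simp add: sum.atLeast1_atMost_eq)
  ultimately show ?thesis
    using response_optimal_input_partition[OF \<sigma>(3) \<sigma>(1,2)]
    unfolding alternating_partition_def \<Xi>_def by (intro exI[of _ \<sigma>] exI[of _ \<epsilon>]) auto
qed

section \<open>The input bounds\<close>

lemma mpow_scaleR: "mpow (s *\<^sub>R B) k = s ^ k *\<^sub>R mpow (B :: ('n::finite) rmat) k"
  by (induction k) (simp_all add: vec_eq_iff matrix_matrix_mult_def sum_distrib_left algebra_simps)

lemma mpow_entry_bound:
  fixes B :: "('n::finite) rmat"
  shows "\<bar>mpow B k $ i $ j\<bar> \<le> (\<Sum>i\<in>UNIV. \<Sum>j\<in>UNIV. \<bar>B $ i $ j\<bar>) ^ k"
proof (induction k arbitrary: i j)
  case 0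
  then show ?case by (simp add: mat_def)
next
  case (Suc k)
  define m where "m = (\<Sum>i\<in>UNIV. \<Sum>j\<in>UNIV. \<bar>B $ i $ j\<bar>)"
  have row: "(\<Sum>l\<in>UNIV. \<bar>B $ i $ l\<bar>) \<le> m"
    unfolding m_def by (rule member_le_sum) (auto intro: sum_nonneg)
  have "\<bar>mpow B (Suc k) $ i $ j\<bar> = \<bar>\<Sum>l\<in>UNIV. B $ i $ l * mpow B k $ l $ j\<bar>"
    by (simp add: matrix_matrix_mult_def)
  also have "\<dots> \<le> (\<Sum>l\<in>UNIV. \<bar>B $ i $ l\<bar> * m ^ k)"
    by (rule order_trans[OF sum_abs]) (auto intro!: sum_mono mult_left_mono Suc[unfolded m_def[symmetric]] simp: abs_mult)
  also have "\<dots> = (\<Sum>l\<in>UNIV. \<bar>B $ i $ l\<bar>) * m ^ k"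
    by (simp add: sum_distrib_right)
  also have "\<dots> \<le> m * m ^ k"
    using row by (intro mult_right_mono) (auto simp: m_def intro!: sum_nonneg zero_le_power)
  finally show ?case
    by (simp add: m_def)
qed

lemma continuous_mexp_entry: "continuous_on UNIV (\<lambda>s. mexp (s *\<^sub>R (B :: ('n::finite) rmat)) $ i $ j)"
proof -
  define m where "m = (\<Sum>i\<in>UNIV. \<Sum>j\<in>UNIV. \<bar>B $ i $ j\<bar>)"
  define c where "c k = mpow B k $ i $ j / fact k" for k
  have eq: "(\<lambda>s. mexp (s *\<^sub>R B) $ i $ j) = (\<lambda>s. \<Sum>k. c k * s ^ k)"
    unfolding mexp_def c_def by (simp add: mpow_scaleR field_simps)
  have "isCont (\<lambda>s. \<Sum>k. c k * s ^ k) s" for s :: real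
  proof (rule isCont_powser)
    define K where "K = \<bar>s\<bar> + 1"
    show "summable (\<lambda>k. c k * K ^ k)"
    proof (rule summable_comparison_test'[OF summable_exp[of "m * K"]])
      fix k :: nat
      have "norm (c k * K ^ k) = \<bar>mpow B k $ i $ j\<bar> / fact k * K ^ k"
        unfolding c_def K_def by (simp add: abs_mult)
      also have "\<dots> \<le> m ^ k / fact k * K ^ k"
        using mpow_entry_bound[of B k i j] unfolding m_def K_def
        by (intro mult_right_mono divide_right_mono) auto
      also have "\<dots> = inverse (fact k) * (m * K) ^ k"
        by (simp add: field_simps power_mult_distrib)
      finally show "norm (c k * K ^ k) \<le> inverse (fact k) * (m * K) ^ k" .
    qed
    show "norm s < norm K"
      unfolding K_def by simp
  qed
  then show ?thesis
    unfolding eq by (intro continuous_at_imp_continuous_on) auto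
qed

lemma continuous_inner_mexp: "continuous_on UNIV (\<lambda>s. inner c (mexp (s *\<^sub>R (B :: ('n::finite) rmat)) *v v))"
  unfolding inner_vec_def matrix_vector_mult_def
  by (auto intro!: continuous_intros continuous_mexp_entry)

lemma integral_reflect_Icc: "integral {0..s} (\<lambda>\<tau>. \<phi> (s - \<tau>)) = integral {0..s} (\<phi> :: real \<Rightarrow> real)"
proof -
  have "integral {0..s} (\<lambda>\<tau>. \<phi> (s - \<tau>)) = integral {-s..0} (\<lambda>\<tau>. \<phi> (s + \<tau>))"
    using Henstock_Kurzweil_Integration.integral_reflect_real[where f="\<lambda>\<tau>. \<phi> (s + \<tau>)" and a="-s" and b=0]
    by simp
  also have "\<dots> = integral {0..s} \<phi>"
    using integral_shift_Icc_real[of "-s" 0 \<phi> s] by (simp add: o_def)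
  finally show ?thesis .
qed

lemma input_value_le:
  fixes G :: "real \<Rightarrow> real"
  assumes G: "continuous_on {0..s} G" and "0 \<le> s" and v: "v \<in> admissible_inputs s (\<lambda>_. a) (\<lambda>_. b)"
  shows "v s + integral {0..s} (\<lambda>\<tau>. G \<tau> * v \<tau>) \<le> b + integral {0..s} (\<lambda>\<tau>. max (G \<tau> * a) (G \<tau> * b))"
proof -
  have "integral {0..s} (\<lambda>\<tau>. G \<tau> * v \<tau>) \<le> integral {0..s} (\<lambda>\<tau>. max (G \<tau> * a) (G \<tau> * b))"
  proof (rule integral_le)
    show "(\<lambda>\<tau>. G \<tau> * v \<tau>) integrable_on {0..s}" "(\<lambda>\<tau>. max (G \<tau> * a) (G \<tau> * b)) integrable_on {0..s}"
      using G v unfolding admissible_inputs_def by (auto intro!: integrable_continuous_real continuous_intros)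
    show "G \<tau> * v \<tau> \<le> max (G \<tau> * a) (G \<tau> * b)" if "\<tau> \<in> {0..s}" for \<tau>
      using v that unfolding admissible_inputs_def
      by (cases "0 \<le> G \<tau>") (auto intro: mult_left_mono mult_left_mono_neg simp: le_max_iff_disj)
  qed
  moreover have "v s \<le> b"
    using v \<open>0 \<le> s\<close> unfolding admissible_inputs_def by auto
  ultimately show ?thesis
    by linarith
qed

lemma raised_smoothed_bang_bang:
  fixes a b k h g C :: real
  assumes "a \<le> b" "0 < k" "0 \<le> h" "h \<le> 1" "\<bar>g\<bar> \<le> C"
  defines "v \<equiv> max (smoothed_bang_bang a b k g) (a + (b - a) * h)"
  shows "a \<le> v" "v \<le> b"
    and "max (g * a) (g * b) - ((b - a) / (2 * k) + C * (b - a) * h) \<le> g * v"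
proof -
  define w where "w = smoothed_bang_bang a b k g"
  have w: "a \<le> w" "w \<le> b"
    unfolding w_def using smoothed_bang_bang_bounds[OF \<open>a \<le> b\<close>] by auto
  have "(b - a) * h \<le> (b - a) * 1"
    using assms by (intro mult_left_mono) auto
  with w assms have v: "0 \<le> v - w" "v - w \<le> (b - a) * h"
    unfolding v_def w_def[symmetric] by (auto simp: max_def)
  with w show "a \<le> v" "v \<le> b"
    using \<open>(b - a) * h \<le> (b - a) * 1\<close> unfolding v_def w_def[symmetric] by auto
  have "max (g * a) (g * b) - (b - a) / (2 * k) \<le> g * w"
    using smoothed_bang_bang_gap[OF \<open>a \<le> b\<close> \<open>0 < k\<close>, of g] mult_bang_bang[OF \<open>a \<le> b\<close>, of g]
    unfolding w_def by (simp add: algebra_simps)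
  moreover have "- (g * (v - w)) \<le> C * (b - a) * h"
  proof -
    have "(- g) * (v - w) \<le> \<bar>g\<bar> * (v - w)"
      using v by (intro mult_right_mono) auto
    also have "\<dots> \<le> C * ((b - a) * h)"
      using assms v by (intro mult_mono) auto
    finally show ?thesis
      by (simp add: mult.assoc)
  qed
  moreover have "g * v = g * w + g * (v - w)"
    by (simp add: algebra_simps)
  ultimately show "max (g * a) (g * b) - ((b - a) / (2 * k) + C * (b - a) * h) \<le> g * v"
    by linarith
qed

text \<open>The supremum is approached by smoothed bang-bang inputs, raised to \<open>b\<close> near the endpoint \<open>s\<close>
  where the point value \<open>v s\<close> is read off.\<close>

lemma input_value_approx:
  fixes G :: "real \<Rightarrow> real"
  assumes G: "continuous_on {0..s} G" and "a \<le> b" "0 \<le> s"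
    and C: "\<And>\<tau>. \<tau> \<in> {0..s} \<Longrightarrow> \<bar>G \<tau>\<bar> \<le> C"
  obtains v where "v \<in> admissible_inputs s (\<lambda>_. a) (\<lambda>_. b)"
    "b + integral {0..s} (\<lambda>\<tau>. max (G \<tau> * a) (G \<tau> * b))
       - ((b - a) * s / 2 / real (Suc j) + C * (b - a) * integral {0..s} (\<lambda>\<tau>. max 0 (1 - real (Suc j) * \<bar>s - \<tau>\<bar>)))
     \<le> v s + integral {0..s} (\<lambda>\<tau>. G \<tau> * v \<tau>)"
proof
  define k where "k = real (Suc j)"
  define h where "h \<tau> = max 0 (1 - k * \<bar>s - \<tau>\<bar>)" for \<tau>
  define v where "v \<tau> = max (smoothed_bang_bang a b k (G \<tau>)) (a + (b - a) * h \<tau>)" for \<tau>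
  have h: "0 \<le> h \<tau>" "h \<tau> \<le> 1" for \<tau>
    unfolding h_def k_def by auto
  have raised: "a \<le> v \<tau>" "v \<tau> \<le> b"
    "max (G \<tau> * a) (G \<tau> * b) - ((b - a) / (2 * k) + C * (b - a) * h \<tau>) \<le> G \<tau> * v \<tau>"
    if "\<tau> \<in> {0..s}" for \<tau>
    using raised_smoothed_bang_bang[of a b k "h \<tau>" "G \<tau>" C] \<open>a \<le> b\<close> h[of \<tau>] C[OF that]
    unfolding v_def k_def by auto
  have cont_v: "continuous_on {0..s} v"
    unfolding v_def h_def smoothed_bang_bang_def using G by (intro continuous_intros)
  then show "v \<in> admissible_inputs s (\<lambda>_. a) (\<lambda>_. b)"
    using raised(1,2) by (simp add: admissible_inputs_def)
  have "v s = b"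
    using smoothed_bang_bang_bounds[OF \<open>a \<le> b\<close>] unfolding v_def h_def by simp
  have iM: "(\<lambda>\<tau>. max (G \<tau> * a) (G \<tau> * b)) integrable_on {0..s}"
    using G by (intro integrable_continuous_real continuous_intros)
  have ih: "h integrable_on {0..s}"
    unfolding h_def by (intro integrable_continuous_real continuous_intros)
  have "integral {0..s} (\<lambda>\<tau>. (b - a) / (2 * k) + C * (b - a) * h \<tau>)
      = (b - a) / (2 * k) * s + C * (b - a) * integral {0..s} h"
    using \<open>0 \<le> s\<close> integral_mult[OF ih, of "C * (b - a)"]
      integral_add[OF integrable_const_ivl integrable_on_mult_right[OF ih], of "(b - a) / (2 * k)" "C * (b - a)"]
    by simp
  moreover have "(\<lambda>\<tau>. (b - a) / (2 * k) + C * (b - a) * h \<tau>) integrable_on {0..s}"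
    by (intro integrable_add integrable_on_mult_right ih) auto
  ultimately have "integral {0..s} (\<lambda>\<tau>. max (G \<tau> * a) (G \<tau> * b))
        - ((b - a) / (2 * k) * s + C * (b - a) * integral {0..s} h)
      = integral {0..s} (\<lambda>\<tau>. max (G \<tau> * a) (G \<tau> * b) - ((b - a) / (2 * k) + C * (b - a) * h \<tau>))"
    using integral_diff[OF iM] by simp
  also have "\<dots> \<le> integral {0..s} (\<lambda>\<tau>. G \<tau> * v \<tau>)"
    using raised(3) G cont_v unfolding h_def k_def
    by (intro integral_le integrable_continuous_real continuous_intros) auto
  finally show "b + integral {0..s} (\<lambda>\<tau>. max (G \<tau> * a) (G \<tau> * b))
       - ((b - a) * s / 2 / real (Suc j) + C * (b - a) * integral {0..s} (\<lambda>\<tau>. max 0 (1 - real (Suc j) * \<bar>s - \<tau>\<bar>)))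
     \<le> v s + integral {0..s} (\<lambda>\<tau>. G \<tau> * v \<tau>)"
    unfolding \<open>v s = b\<close> h_def k_def by (simp add: field_simps)
qed

lemma Sup_input_values:
  fixes G :: "real \<Rightarrow> real"
  assumes G: "continuous_on {0..s} G" and "a \<le> b" "0 \<le> s"
  shows "Sup ((\<lambda>v. v s + integral {0..s} (\<lambda>\<tau>. G \<tau> * v \<tau>)) ` admissible_inputs s (\<lambda>_. a) (\<lambda>_. b))
    = b + integral {0..s} (\<lambda>\<tau>. max (G \<tau> * a) (G \<tau> * b))"
proof (rule cSup_eq_non_empty)
  have "(\<lambda>_. a) \<in> admissible_inputs s (\<lambda>_. a) (\<lambda>_. b)"
    using \<open>a \<le> b\<close> by (simp add: admissible_inputs_def)
  then show "(\<lambda>v. v s + integral {0..s} (\<lambda>\<tau>. G \<tau> * v \<tau>)) ` admissible_inputs s (\<lambda>_. a) (\<lambda>_. b) \<noteq> {}"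
    by blast
next
  fix x assume "x \<in> (\<lambda>v. v s + integral {0..s} (\<lambda>\<tau>. G \<tau> * v \<tau>)) ` admissible_inputs s (\<lambda>_. a) (\<lambda>_. b)"
  then show "x \<le> b + integral {0..s} (\<lambda>\<tau>. max (G \<tau> * a) (G \<tau> * b))"
    using input_value_le[OF G \<open>0 \<le> s\<close>] by blast
next
  fix M
  assume M: "\<And>x. x \<in> (\<lambda>v. v s + integral {0..s} (\<lambda>\<tau>. G \<tau> * v \<tau>)) ` admissible_inputs s (\<lambda>_. a) (\<lambda>_. b) \<Longrightarrow> x \<le> M"
  obtain C where C: "\<And>\<tau>. \<tau> \<in> {0..s} \<Longrightarrow> \<bar>G \<tau>\<bar> \<le> C"
    using continuous_on_compact_bound[OF compact_Icc G] unfolding real_norm_def by blast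
  define err where "err j = (b - a) * s / 2 / real (Suc j)
    + C * (b - a) * integral {0..s} (\<lambda>\<tau>. max 0 (1 - real (Suc j) * \<bar>s - \<tau>\<bar>))" for j
  have bound: "b + integral {0..s} (\<lambda>\<tau>. max (G \<tau> * a) (G \<tau> * b)) - err j \<le> M" for j
  proof -
    from input_value_approx[OF G \<open>a \<le> b\<close> \<open>0 \<le> s\<close> C, of j]
    obtain v where v: "v \<in> admissible_inputs s (\<lambda>_. a) (\<lambda>_. b)"
      "b + integral {0..s} (\<lambda>\<tau>. max (G \<tau> * a) (G \<tau> * b)) - err j \<le> v s + integral {0..s} (\<lambda>\<tau>. G \<tau> * v \<tau>)"
      unfolding err_def by blast
    from v(1) have "v s + integral {0..s} (\<lambda>\<tau>. G \<tau> * v \<tau>) \<le> M"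
      by (intro M) blast
    with v(2) show ?thesis
      by linarith
  qed
  have "(\<lambda>j. (b - a) * s / 2 / real (Suc j)) \<longlonglongrightarrow> 0"
    by (rule LIMSEQ_Suc[OF lim_const_over_n])
  moreover have "(\<lambda>j. C * (b - a) * integral {0..s} (\<lambda>\<tau>. max 0 (1 - real (Suc j) * \<bar>s - \<tau>\<bar>))) \<longlonglongrightarrow> 0"
  proof (rule tendsto_mult_right_zero, rule integral_bump_tendsto_0)
    show "continuous_on {0..s} (\<lambda>\<tau>. s - \<tau>)"
      by (intro continuous_intros)
    show "finite {\<tau> \<in> {0..s}. s - \<tau> = 0}"
      by (rule finite_subset[of _ "{s}"]) auto
  qed
  ultimately have "err \<longlonglongrightarrow> 0"
    unfolding err_def using tendsto_add by fastforce
  then have "(\<lambda>j. b + integral {0..s} (\<lambda>\<tau>. max (G \<tau> * a) (G \<tau> * b)) - err j)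
      \<longlonglongrightarrow> b + integral {0..s} (\<lambda>\<tau>. max (G \<tau> * a) (G \<tau> * b))"
    using tendsto_diff[OF tendsto_const] by fastforce
  then show "b + integral {0..s} (\<lambda>\<tau>. max (G \<tau> * a) (G \<tau> * b)) \<le> M"
    by (rule LIMSEQ_le_const2) (use bound in blast)
qed

lemma Inf_input_values:
  fixes G :: "real \<Rightarrow> real"
  assumes G: "continuous_on {0..s} G" and "a \<le> b" "0 \<le> s"
  shows "Inf ((\<lambda>v. v s + integral {0..s} (\<lambda>\<tau>. G \<tau> * v \<tau>)) ` admissible_inputs s (\<lambda>_. a) (\<lambda>_. b))
    = a + integral {0..s} (\<lambda>\<tau>. min (G \<tau> * a) (G \<tau> * b))"
proof -
  define V where "V v = v s + integral {0..s} (\<lambda>\<tau>. G \<tau> * v \<tau>)" for v :: "real \<Rightarrow> real"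
  have V_neg: "V (\<lambda>\<tau>. - v \<tau>) = - V v" for v
    unfolding V_def by simp
  have "(\<lambda>v \<tau>. - v \<tau>) ` admissible_inputs s (\<lambda>_. a) (\<lambda>_. b) = admissible_inputs s (\<lambda>_. - b) (\<lambda>_. - a)"
  proof (intro equalityI subsetI)
    fix w assume "w \<in> admissible_inputs s (\<lambda>_. - b) (\<lambda>_. - a)"
    then have "(\<lambda>\<tau>. - w \<tau>) \<in> admissible_inputs s (\<lambda>_. a) (\<lambda>_. b)"
      by (auto simp: admissible_inputs_def intro: continuous_intros)
    then show "w \<in> (\<lambda>v \<tau>. - v \<tau>) ` admissible_inputs s (\<lambda>_. a) (\<lambda>_. b)"
      by (intro image_eqI[where x="\<lambda>\<tau>. - w \<tau>"]) simp_all
  qed (auto simp: admissible_inputs_def intro: continuous_intros)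
  then have "uminus ` V ` admissible_inputs s (\<lambda>_. a) (\<lambda>_. b) = V ` admissible_inputs s (\<lambda>_. - b) (\<lambda>_. - a)"
    by (simp add: image_image V_neg[symmetric] flip: image_image[of V "\<lambda>v \<tau>. - v \<tau>"])
  moreover have "(\<lambda>\<tau>. max (G \<tau> * - b) (G \<tau> * - a)) = (\<lambda>\<tau>. - min (G \<tau> * a) (G \<tau> * b))"
    by (auto simp: fun_eq_iff max_def min_def)
  ultimately show ?thesis
    using Sup_input_values[OF G _ \<open>0 \<le> s\<close>, of "- b" "- a"] \<open>a \<le> b\<close>
    by (simp add: Inf_real_def V_def)
qed

lemma fker_eq: "fker A s \<tau> = fker A (s - \<tau>) 0"
  by (simp add: fker_def)

lemma continuous_fker: "continuous_on S (\<lambda>r. fker A r 0)"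
  unfolding fker_def diff_zero by (rule continuous_on_subset[OF continuous_inner_mexp]) simp

lemma Ivals_eq:
  "Ivals A vmin vmax s = (\<lambda>v. v s + integral {0..s} (\<lambda>\<tau>. - fker A s \<tau> * v \<tau>)) ` admissible_inputs s (\<lambda>_. vmin) (\<lambda>_. vmax)"
  unfolding Ivals_def Ifun_def admissible_inputs_def by auto

lemma
  fixes A :: "('n::{finite,wellorder}) rmat"
  assumes "vmin \<le> vmax" "0 \<le> s"
  shows umax_eq: "umax A b vmin vmax z0 s = - inner (charcoef A) (mexp (s *\<^sub>R Acon A) *v (Mmat A b *v z0))
      + vmax + integral {0..s} (\<lambda>r. max (- fker A r 0 * vmin) (- fker A r 0 * vmax))"
    and umin_eq: "umin A b vmin vmax z0 s = - inner (charcoef A) (mexp (s *\<^sub>R Acon A) *v (Mmat A b *v z0))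
      + vmin + integral {0..s} (\<lambda>r. min (- fker A r 0 * vmin) (- fker A r 0 * vmax))"
proof -
  have G: "continuous_on {0..s} (\<lambda>\<tau>. - fker A s \<tau>)"
    unfolding fker_eq[of A s] using continuous_fker
    by (intro continuous_intros continuous_on_compose2[OF continuous_fker[of UNIV]]) auto
  show "umax A b vmin vmax z0 s = - inner (charcoef A) (mexp (s *\<^sub>R Acon A) *v (Mmat A b *v z0))
      + vmax + integral {0..s} (\<lambda>r. max (- fker A r 0 * vmin) (- fker A r 0 * vmax))"
    using Sup_input_values[OF G assms] integral_reflect_Icc[of s "\<lambda>r. max (- fker A r 0 * vmin) (- fker A r 0 * vmax)"]
    unfolding umax_def Imax_def Ivals_eq by (simp add: fker_eq[of A s])
  show "umin A b vmin vmax z0 s = - inner (charcoef A) (mexp (s *\<^sub>R Acon A) *v (Mmat A b *v z0))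
      + vmin + integral {0..s} (\<lambda>r. min (- fker A r 0 * vmin) (- fker A r 0 * vmax))"
    using Inf_input_values[OF G assms] integral_reflect_Icc[of s "\<lambda>r. min (- fker A r 0 * vmin) (- fker A r 0 * vmax)"]
    unfolding umin_def Imin_def Ivals_eq by (simp add: fker_eq[of A s])
qed

lemma
  fixes A :: "('n::{finite,wellorder}) rmat"
  assumes "vmin \<le> vmax"
  shows continuous_on_umax: "continuous_on {0..t} (umax A b vmin vmax z0)"
    and continuous_on_umin: "continuous_on {0..t} (umin A b vmin vmax z0)"
proof -
  have E: "continuous_on {0..t} (\<lambda>s. inner (charcoef A) (mexp (s *\<^sub>R Acon A) *v (Mmat A b *v z0)))"
    by (rule continuous_on_subset[OF continuous_inner_mexp]) simp
  have "continuous_on {0..t} (\<lambda>s. - inner (charcoef A) (mexp (s *\<^sub>R Acon A) *v (Mmat A b *v z0))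
      + vmax + integral {0..s} (\<lambda>r. max (- fker A r 0 * vmin) (- fker A r 0 * vmax)))"
    by (intro continuous_intros E indefinite_integral_continuous_1 integrable_continuous_real continuous_fker)
  then show "continuous_on {0..t} (umax A b vmin vmax z0)"
    by (rule continuous_on_eq) (simp add: umax_eq[OF assms])
  have "continuous_on {0..t} (\<lambda>s. - inner (charcoef A) (mexp (s *\<^sub>R Acon A) *v (Mmat A b *v z0))
      + vmin + integral {0..s} (\<lambda>r. min (- fker A r 0 * vmin) (- fker A r 0 * vmax)))"
    by (intro continuous_intros E indefinite_integral_continuous_1 integrable_continuous_real continuous_fker)
  then show "continuous_on {0..t} (umin A b vmin vmax z0)"
    by (rule continuous_on_eq) (simp add: umin_eq[OF assms])
qed

lemma umin_le_umax:
  fixes A :: "('n::{finite,wellorder}) rmat"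
  assumes "vmin \<le> vmax" "0 \<le> s"
  shows "umin A b vmin vmax z0 s \<le> umax A b vmin vmax z0 s"
proof -
  have "integral {0..s} (\<lambda>r. min (- fker A r 0 * vmin) (- fker A r 0 * vmax))
      \<le> integral {0..s} (\<lambda>r. max (- fker A r 0 * vmin) (- fker A r 0 * vmax))"
    by (intro integral_le integrable_continuous_real continuous_intros continuous_fker) auto
  with assms show ?thesis
    by (simp add: umin_eq umax_eq)
qed

theorem theorem2:
  fixes A :: "('n::{finite,wellorder}) rmat" and b z0 :: "'n rvec"
    and vmin vmax t :: real and xbdy :: "'n rvec"
  assumes "controllable A b"
    and "distinct_eigenvalues A"
    and "vmin \<le> vmax"
    and "t > 0"
    and "xbdy \<in> frontier (int_reach t (Mmat A b *v z0) (umin A b vmin vmax z0) (umax A b vmin vmax z0))"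
  shows "\<exists>\<sigma>::nat \<Rightarrow> real. \<exists>\<epsilon>::real. \<epsilon> \<in> {1, -1} \<and>
           \<sigma> 0 = 0 \<and> \<sigma> CARD('n) = t \<and> (\<forall>i<CARD('n). \<sigma> i \<le> \<sigma> (Suc i)) \<and>
           xbdy = chi_vec t (Mmat A b *v z0)
             + integral {0..t} (\<lambda>s. ((umax A b vmin vmax z0 s + umin A b vmin vmax z0 s) / 2) *\<^sub>R xi (t - s))
             + \<epsilon> *\<^sub>R (\<Sum>i\<in>{1..CARD('n)}. (-1) ^ (i - 1) *\<^sub>R
                 integral {\<sigma> (i - 1)..\<sigma> i}
                   (\<lambda>s. ((umax A b vmin vmax z0 s - umin A b vmin vmax z0 s) / 2) *\<^sub>R xi (t - s)))"
proof -
  (* Controllability and distinct eigenvalues only enter the definition of the coordinate change M;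
     the boundary of the integrator reach set has this form for any continuous bounds. *)
  have "umin A b vmin vmax z0 s \<le> umax A b vmin vmax z0 s" if "s \<in> {0..t}" for s
    using that by (intro umin_le_umax \<open>vmin \<le> vmax\<close>) simp
  from frontier_int_reach_bang_bang[OF \<open>t > 0\<close> continuous_on_umin[OF \<open>vmin \<le> vmax\<close>]
      continuous_on_umax[OF \<open>vmin \<le> vmax\<close>] this assms(5)]
  show ?thesis .
qed

end
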